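(* Let $G$ be a triangle-free graph on $n$ vertices that contains a leaf. Then $\phi(G)<0.93\cdot 6^{n/4}$.
   Context: Graphs are finite and simple; a leaf is a vertex of degree $1$. A subset $F$ of vertices is a dissociation set if $G[F]$ has maximum degree at most $1$; a maximal dissociation set is one not properly contained in another dissociation set; $\phi(G)$ is the number of maximal dissociation sets of $G$. *)

theory Defs
  imports Complex_Main
begin

definition simple_graph :: "'a set \<Rightarrow> ('a \<Rightarrow> 'a \<Rightarrow> bool) \<Rightarrow> bool" where
  "simple_graph V E \<longleftrightarrow> finite V \<and> (\<forall>u v. E u v \<longrightarrow> u \<in> V \<and> v \<in> V)
     \<and> (\<forall>u v. E u v \<longrightarrow> E v u) \<and> (\<forall>v. \<not> E v v)"

definition neighbors :: "'a set \<Rightarrow> ('a \<Rightarrow> 'a \<Rightarrow> bool) \<Rightarrow> 'a \<Rightarrow> 'a set" where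
  "neighbors V E v = {u \<in> V. E v u}"

definition degree :: "'a set \<Rightarrow> ('a \<Rightarrow> 'a \<Rightarrow> bool) \<Rightarrow> 'a \<Rightarrow> nat" where
  "degree V E v = card (neighbors V E v)"

definition triangle_free :: "'a set \<Rightarrow> ('a \<Rightarrow> 'a \<Rightarrow> bool) \<Rightarrow> bool" where
  "triangle_free V E \<longleftrightarrow> \<not> (\<exists>a\<in>V. \<exists>b\<in>V. \<exists>c\<in>V. E a b \<and> E b c \<and> E a c)"

definition has_leaf :: "'a set \<Rightarrow> ('a \<Rightarrow> 'a \<Rightarrow> bool) \<Rightarrow> bool" where
  "has_leaf V E \<longleftrightarrow> (\<exists>v\<in>V. degree V E v = 1)"

definition dissociation_set :: "'a set \<Rightarrow> ('a \<Rightarrow> 'a \<Rightarrow> bool) \<Rightarrow> 'a set \<Rightarrow> bool" where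
  "dissociation_set V E F \<longleftrightarrow> F \<subseteq> V \<and> (\<forall>v\<in>F. degree F E v \<le> 1)"

definition maximal_dissociation_set :: "'a set \<Rightarrow> ('a \<Rightarrow> 'a \<Rightarrow> bool) \<Rightarrow> 'a set \<Rightarrow> bool" where
  "maximal_dissociation_set V E F \<longleftrightarrow> dissociation_set V E F
     \<and> \<not> (\<exists>F'. dissociation_set V E F' \<and> F \<subset> F')"

definition phi :: "'a set \<Rightarrow> ('a \<Rightarrow> 'a \<Rightarrow> bool) \<Rightarrow> nat" where
  "phi V E = card {F. maximal_dissociation_set V E F}"

end

theory Submission
  imports Defs
begin

text \<open>
  Give each vertex of a triangle-free graph the weight \<open>\<omega>(d)\<close> of its degree \<open>d\<close>, where
  \<open>\<omega>(0) = 1\<close>, \<open>\<omega>(1) = \<sigma> = sqrt (3 / \<beta>)\<close> and \<open>\<omega>(d) = \<beta> = 6 powr (1/4)\<close> for \<open>d \<ge> 2\<close>,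
  and let the weight of the graph be the product of the vertex weights. By induction on the
  number of vertices, \<open>\<phi>(G)\<close> is at most this weight. Branching on a vertex \<open>v\<close>, a maximal
  dissociation set avoids \<open>v\<close>, or contains \<open>v\<close> but no neighbour of it, or contains \<open>v\<close> and
  exactly one neighbour \<open>u\<close>; removing its part near \<open>v\<close> leaves a maximal dissociation set of
  \<open>G - v\<close>, \<open>G - N[v]\<close> or \<open>G - N[u] - N[v]\<close>, respectively. Deleting vertices divides the weight
  by a factor read off from the degrees, and for a suitable choice of \<open>v\<close> (an isolated vertex,
  a \<open>K\<^sub>2\<close> component, a leaf, a vertex of degree at least 4, a vertex of degree 3 next to one of
  degree 2, a vertex in a cubic part, or a 2-regular graph) these factors sum to at most 1.
  A leaf contributes \<open>\<sigma> < 0.93 \<beta>\<close> instead of \<open>\<beta>\<close>, which gives the bound \<open>0.93 \<cdot> 6\<^bsup>n/4\<^esup>\<close>.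
\<close>

lemma card_le_sum_of_cover:
  assumes "A \<subseteq> B \<union> C \<union> (\<Union>i\<in>I. D i)"
    and "finite B" "finite C" "finite I" "\<And>i. i \<in> I \<Longrightarrow> finite (D i)"
  shows "card A \<le> card B + card C + (\<Sum>i\<in>I. card (D i))"
proof -
  have "card A \<le> card (B \<union> C \<union> (\<Union>i\<in>I. D i))"
    using assms by (intro card_mono) auto
  also have "\<dots> \<le> card B + card C + card (\<Union>i\<in>I. D i)"
    by (meson add_mono card_Un_le order_trans le_refl)
  also have "card (\<Union>i\<in>I. D i) \<le> (\<Sum>i\<in>I. card (D i))"
    using assms(4) by (rule card_UN_le)
  finally show ?thesis by simp
qed

lemma card_2_obtain:
  assumes "finite A" "card A = 2" "a \<in> A"
  obtains b where "A = {a, b}" "b \<noteq> a"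
proof -
  have "card (A - {a}) = 1" using assms by simp
  then obtain b where "A - {a} = {b}" by (auto simp: card_Suc_eq)
  then show ?thesis using that assms(3) by blast
qed

lemma card_degree_classes:
  fixes g :: "'a \<Rightarrow> nat"
  assumes fin: "finite W" and pos: "\<forall>w\<in>W. 1 \<le> g w"
  shows "card {w \<in> W. 2 \<le> g w} = card {w \<in> W. g w = 2} + card {w \<in> W. 3 \<le> g w}"
    and "card W = card {w \<in> W. g w = 1} + card {w \<in> W. g w = 2} + card {w \<in> W. 3 \<le> g w}"
proof -
  have "{w \<in> W. 2 \<le> g w} = {w \<in> W. g w = 2} \<union> {w \<in> W. 3 \<le> g w}" by auto
  then show ge2: "card {w \<in> W. 2 \<le> g w} = card {w \<in> W. g w = 2} + card {w \<in> W. 3 \<le> g w}"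
    using fin by (simp add: card_Un_disjoint disjoint_iff)
  have "{w \<in> W. g w = 1} \<union> {w \<in> W. 2 \<le> g w} = W" using pos by force
  moreover have "card ({w \<in> W. g w = 1} \<union> {w \<in> W. 2 \<le> g w}) = card {w \<in> W. g w = 1} + card {w \<in> W. 2 \<le> g w}"
    using fin by (simp add: card_Un_disjoint disjoint_iff)
  ultimately show "card W = card {w \<in> W. g w = 1} + card {w \<in> W. g w = 2} + card {w \<in> W. 3 \<le> g w}"
    using ge2 by simp
qed

section \<open>The weights and the branching inequalities\<close>

definition \<beta> :: real where
  "\<beta> = 6 powr (1/4)"

text \<open>Chosen so that \<open>\<sigma>\<^sup>2 \<beta> = 3\<close>: the path on three vertices, with weight \<open>\<sigma> \<beta> \<sigma>\<close>, has exactly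
  three maximal dissociation sets.\<close>
definition \<sigma> :: real where
  "\<sigma> = sqrt (3 / \<beta>)"

definition \<omega> :: "nat \<Rightarrow> real" where
  "\<omega> d = (if d = 0 then 1 else if d = 1 then \<sigma> else \<beta>)"

lemma beta_pos: "\<beta> > 0"
  by (simp add: \<beta>_def)

lemma beta_powr: "\<beta> ^ n = 6 powr (real n / 4)"
proof -
  have "\<beta> ^ n = \<beta> powr (real n)" using beta_pos by (simp add: powr_realpow)
  also have "\<dots> = 6 powr (1/4 * real n)" unfolding \<beta>_def by (simp add: powr_powr)
  finally show ?thesis by simp
qed

lemma beta_pow4: "\<beta> ^ 4 = 6"
  using beta_powr[of 4] by simp

lemma beta_pow5: "\<beta> ^ 5 = 6 * \<beta>"
  using beta_pow4 by (simp add: eval_nat_numeral algebra_simps)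

lemma beta_pow6: "\<beta> ^ 6 = 6 * \<beta> ^ 2"
  using beta_pow4 by (simp add: eval_nat_numeral algebra_simps)

lemma beta_pow7: "\<beta> ^ 7 = 6 * \<beta> ^ 3"
  using beta_pow4 by (simp add: eval_nat_numeral algebra_simps)

lemma sigma_pos: "\<sigma> > 0"
  using beta_pos by (simp add: \<sigma>_def)

lemma sigma_sq: "\<sigma> ^ 2 = 3 / \<beta>"
  using beta_pos by (simp add: \<sigma>_def)

lemma sigma_cube: "\<sigma> ^ 3 = 3 * \<sigma> / \<beta>"
  using sigma_sq by (simp add: power3_eq_cube power2_eq_square)

lemma beta_bounds: "1.56508 \<le> \<beta>" "\<beta> \<le> 1.56509"
proof -
  have "(1.56508::real) ^ 4 < \<beta> ^ 4" "\<beta> ^ 4 < (1.56509::real) ^ 4"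
    unfolding beta_pow4 by (simp_all add: eval_nat_numeral)
  then show "1.56508 \<le> \<beta>" "\<beta> \<le> 1.56509"
    using beta_pos by (auto dest: power_less_imp_less_base)
qed

lemma sigma_bounds: "1.38449 \<le> \<sigma>" "\<sigma> \<le> 1.38450"
proof -
  have "(1.38449::real) ^ 2 \<le> 3 / 1.56509" "(3::real) / 1.56508 \<le> 1.38450 ^ 2"
    by (simp_all add: eval_nat_numeral)
  moreover have "3 / 1.56509 \<le> \<sigma> ^ 2" "\<sigma> ^ 2 \<le> 3 / 1.56508"
    unfolding sigma_sq using beta_bounds beta_pos by (simp_all add: field_simps)
  ultimately have "(1.38449::real) ^ 2 \<le> \<sigma> ^ 2" "\<sigma> ^ 2 \<le> (1.38450::real) ^ 2"
    by linarith+
  then show "1.38449 \<le> \<sigma>" "\<sigma> \<le> 1.38450"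
    using sigma_pos by (auto intro: power2_le_imp_le)
qed

lemma beta_sq_bounds: "1.56508 ^ 2 \<le> \<beta> ^ 2" "\<beta> ^ 2 \<le> 1.56509 ^ 2"
  using beta_bounds beta_pos by (auto intro: power_mono)

lemma beta_cube_lower: "1.56508 ^ 3 \<le> \<beta> ^ 3"
  using beta_bounds by (intro power_mono) auto

lemma omega_pos: "\<omega> d > 0"
  using beta_pos sigma_pos by (simp add: \<omega>_def)

lemma one_le_omega: "1 \<le> \<omega> d"
  using sigma_bounds beta_bounds by (simp add: \<omega>_def)

lemma omega_mono: "d \<le> d' \<Longrightarrow> \<omega> d \<le> \<omega> d'"
  using sigma_bounds beta_bounds by (auto simp: \<omega>_def)

lemma omega_ge2: "2 \<le> d \<Longrightarrow> \<omega> d = \<beta>"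
  by (simp add: \<omega>_def)

lemma sigma_less_beta: "\<sigma> < \<beta>"
  using sigma_bounds beta_bounds by simp

lemma deg3_branching_bound:
  assumes "1 \<le> m" "m \<le> 3"
  shows "\<sigma> ^ m / \<beta> ^ (m + 1) + 1 / \<beta> ^ 4 + real m / \<beta> ^ 5 + real (3 - m) / \<beta> ^ 6 \<le> 0.975"
proof -
  consider "m = 1" | "m = 2" | "m = 3" using assms by linarith
  then show ?thesis
  proof cases
    case 1
    have "\<sigma> / \<beta>^2 + 1 / \<beta>^4 + 1 / \<beta>^5 + 2 / \<beta>^6 = (6 * \<sigma> + \<beta> + 2 + \<beta>^2) / (6 * \<beta>^2)"
      unfolding beta_pow4 beta_pow5 beta_pow6 using beta_pos by (simp add: field_simps power2_eq_square)
    also have "\<dots> \<le> 0.975"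
      using beta_pos sigma_bounds beta_bounds beta_sq_bounds by (simp add: field_simps)
    finally show ?thesis using 1 by (simp add: eval_nat_numeral)
  next
    case 2
    have "\<sigma>^2 / \<beta>^3 + 1 / \<beta>^4 + 2 / \<beta>^5 + 1 / \<beta>^6 = (4 * \<beta>^2 + 2 * \<beta> + 1) / (6 * \<beta>^2)"
      unfolding beta_pow5 beta_pow6 sigma_sq using beta_pos beta_pow4
      by (simp add: field_simps power2_eq_square eval_nat_numeral)
    also have "\<dots> \<le> 0.975"
      using beta_pos beta_bounds beta_sq_bounds by (simp add: field_simps)
    finally show ?thesis using 2 by (simp add: eval_nat_numeral)
  next
    case 3
    have "\<sigma>^3 / \<beta>^4 + 1 / \<beta>^4 + 3 / \<beta>^5 = (3 * \<sigma> + \<beta> + 3) / (6 * \<beta>)"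
      unfolding beta_pow4 beta_pow5 sigma_cube using beta_pos by (simp add: field_simps)
    also have "\<dots> \<le> 0.975"
      using beta_pos beta_bounds sigma_bounds by (simp add: field_simps)
    finally show ?thesis using 3 by (simp add: eval_nat_numeral)
  qed
qed

lemma cubic_branching_bound: "0.975 / \<beta> + 1 / \<beta>^4 + 3 / \<beta>^6 \<le> 1"
proof -
  have "0.975 / \<beta> + 1 / \<beta>^4 + 3 / \<beta>^6 = (5.85 * \<beta> + \<beta>^2 + 3) / (6 * \<beta>^2)"
    unfolding beta_pow4 beta_pow6 using beta_pos by (simp add: field_simps power2_eq_square)
  also have "\<dots> \<le> 1"
    using beta_pos beta_bounds beta_sq_bounds by (simp add: field_simps)
  finally show ?thesis .
qed

lemma four_cycle_branching_bound: "\<sigma>^2 / \<beta>^3 + 3 / \<beta>^4 \<le> 1"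
proof -
  have "\<sigma>^2 / \<beta>^3 = 3 / \<beta>^4"
    unfolding sigma_sq using beta_pos by (simp add: field_simps eval_nat_numeral)
  then show ?thesis unfolding beta_pow4 by simp
qed

lemma cycle_branching_bound: "\<sigma>^2 / \<beta>^3 + \<sigma>^2 / \<beta>^5 + 2 * \<sigma> / \<beta>^5 \<le> 1"
proof -
  have "\<sigma>^2 / \<beta>^3 = 3 / \<beta>^4" "\<sigma>^2 / \<beta>^5 = 3 / \<beta>^6"
    unfolding sigma_sq using beta_pos by (simp_all add: field_simps eval_nat_numeral)
  moreover have "3 / \<beta>^4 + 3 / \<beta>^6 + 2 * \<sigma> / \<beta>^5 = (3 * \<beta>^2 + 3 + 2 * \<sigma> * \<beta>) / (6 * \<beta>^2)"
    unfolding beta_pow4 beta_pow5 beta_pow6 using beta_pos by (simp add: field_simps power2_eq_square)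
  moreover have "\<sigma> * \<beta> \<le> 1.38450 * 1.56509"
    using sigma_bounds beta_bounds sigma_pos by (intro mult_mono) auto
  then have "(3 * \<beta>^2 + 3 + 2 * \<sigma> * \<beta>) / (6 * \<beta>^2) \<le> 1"
    using beta_pos beta_sq_bounds by (simp add: field_simps)
  ultimately show ?thesis by simp
qed

lemma beta_ratio_antimono:
  assumes "1 \<le> (\<beta> - 1) * (c + real D0)" "D0 \<le> D"
  shows "(c + real D) / \<beta> ^ (D + k) \<le> (c + real D0) / \<beta> ^ (D0 + k)"
  using assms(2)
proof (induction D rule: dec_induct)
  case (step n)
  have "(\<beta> - 1) * (c + real D0) \<le> (\<beta> - 1) * (c + real n)"
    using step.hyps beta_bounds by (intro mult_left_mono) auto
  then have "c + real (Suc n) \<le> \<beta> * (c + real n)"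
    using assms(1) by (simp add: algebra_simps)
  then have "(c + real (Suc n)) / \<beta> ^ (Suc n + k) \<le> \<beta> * (c + real n) / \<beta> ^ (Suc n + k)"
    using beta_pos by (intro divide_right_mono) auto
  also have "\<dots> = (c + real n) / \<beta> ^ (n + k)"
    using beta_pos by simp
  finally show ?case using step.IH by linarith
qed simp

lemma high_degree_branching_bound:
  assumes "4 \<le> D" "1 \<le> m"
  shows "\<sigma>^m / \<beta>^(m + 1) + 1 / \<beta>^(D + 1) + real D / \<beta>^(D + 2) \<le> 1"
proof -
  have "(\<sigma> / \<beta>)^m \<le> (\<sigma> / \<beta>)^1"
    using assms(2) sigma_less_beta sigma_pos beta_pos by (intro power_decreasing) auto
  then have "\<sigma>^m / \<beta>^(m + 1) \<le> \<sigma> / \<beta>^2"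
    using beta_pos by (simp add: power_divide divide_right_mono field_simps power2_eq_square)
  moreover have "1 / \<beta>^(D + 1) + real D / \<beta>^(D + 2) = (\<beta> + real D) / \<beta>^(D + 2)"
    using beta_pos by (simp add: field_simps)
  moreover have "1 \<le> (\<beta> - 1) * (\<beta> + real (4::nat))"
    using beta_bounds beta_sq_bounds by (simp add: algebra_simps power2_eq_square)
  then have "(\<beta> + real D) / \<beta>^(D + 2) \<le> (\<beta> + 4) / \<beta>^6"
    using beta_ratio_antimono[of \<beta> 4 D 2] assms(1) by simp
  moreover have "\<sigma> / \<beta>^2 + (\<beta> + 4) / \<beta>^6 = (6 * \<sigma> + \<beta> + 4) / (6 * \<beta>^2)"
    unfolding beta_pow6 using beta_pos by (simp add: field_simps power2_eq_square)
  moreover have "(6 * \<sigma> + \<beta> + 4) / (6 * \<beta>^2) \<le> 1"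
    using beta_pos sigma_bounds beta_bounds beta_sq_bounds by (simp add: field_simps)
  ultimately show ?thesis by (simp add: eval_nat_numeral)
qed

lemma high_degree_no_deg2_branching_bound:
  assumes "4 \<le> D"
  shows "1 / \<beta> + 1 / \<beta>^(D + 1) + real D / \<beta>^(D + 3) \<le> 1"
proof -
  have "1 / \<beta>^(D + 1) + real D / \<beta>^(D + 3) = (\<beta>^2 + real D) / \<beta>^(D + 3)"
    using beta_pos by (simp add: field_simps power2_eq_square power_add eval_nat_numeral)
  moreover have "1 \<le> (\<beta> - 1) * (\<beta>^2 + real (4::nat))"
    using beta_bounds beta_cube_lower beta_sq_bounds by (simp add: algebra_simps power2_eq_square power3_eq_cube)
  then have "(\<beta>^2 + real D) / \<beta>^(D + 3) \<le> (\<beta>^2 + 4) / \<beta>^7"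
    using beta_ratio_antimono[of "\<beta>^2" 4 D 3] assms by simp
  moreover have "1 / \<beta> + (\<beta>^2 + 4) / \<beta>^7 = (7 * \<beta>^2 + 4) / (6 * \<beta>^3)"
    unfolding beta_pow7 using beta_pos by (simp add: field_simps power2_eq_square power3_eq_cube)
  moreover have "(7 * \<beta>^2 + 4) / (6 * \<beta>^3) \<le> 1"
    using beta_pos beta_cube_lower beta_sq_bounds by (simp add: field_simps)
  ultimately show ?thesis by (simp add: eval_nat_numeral)
qed

text \<open>The slack in the branching inequality for a leaf \<open>v\<close> whose neighbour \<open>u\<close> has, besides \<open>v\<close>,
  \<open>p\<close> neighbours of degree 1, \<open>q\<close> of degree 2 and \<open>r\<close> of degree at least 3.\<close>
definition leaf_slack :: "nat \<Rightarrow> nat \<Rightarrow> nat \<Rightarrow> real" where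
  "leaf_slack p q r = \<sigma>^(p + 1) * \<beta>^(1 + q + r) - \<sigma>^q * \<beta>^r
     - (1 + real p + real q / \<sigma> + real r / \<sigma>^2)"

lemma leaf_slack_Suc_r:
  assumes "0 \<le> leaf_slack p q r"
  shows "0 \<le> leaf_slack p q (Suc r)"
proof -
  let ?C = "1 + real p + real q / \<sigma> + real r / \<sigma>^2"
  have eq: "leaf_slack p q (Suc r) = \<beta> * leaf_slack p q r + ((\<beta> - 1) * ?C - 1 / \<sigma>^2)"
    by (simp add: leaf_slack_def algebra_simps add_divide_distrib diff_divide_distrib)
  have "(\<beta> - 1) * 1 \<le> (\<beta> - 1) * ?C"
    using sigma_pos beta_bounds by (intro mult_left_mono) auto
  then have "\<beta> - 1 \<le> (\<beta> - 1) * ?C" by simp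
  moreover have "1 / \<sigma>^2 = \<beta> / 3"
    using sigma_sq beta_pos by simp
  ultimately have "0 \<le> (\<beta> - 1) * ?C - 1 / \<sigma>^2"
    using beta_bounds[simplified] by linarith
  then show ?thesis unfolding eq using assms beta_pos by simp
qed

lemma leaf_slack_Suc_q:
  assumes "0 \<le> leaf_slack p q 0"
  shows "0 \<le> leaf_slack p (Suc q) 0"
proof -
  let ?C = "1 + real p + real q / \<sigma>"
  have eq: "leaf_slack p (Suc q) 0 = \<beta> * leaf_slack p q 0 + ((\<beta> - \<sigma>) * \<sigma>^q + (\<beta> - 1) * ?C - 1 / \<sigma>)"
    using sigma_pos by (simp add: leaf_slack_def algebra_simps add_divide_distrib diff_divide_distrib)
  have "(\<beta> - 1) * 1 \<le> (\<beta> - 1) * ?C"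
    using sigma_pos beta_bounds by (intro mult_left_mono) auto
  moreover have "(\<beta> - \<sigma>) * 1 \<le> (\<beta> - \<sigma>) * \<sigma>^q"
    using sigma_bounds sigma_less_beta by (intro mult_left_mono one_le_power) auto
  ultimately have "\<beta> - 1 \<le> (\<beta> - 1) * ?C" "\<beta> - \<sigma> \<le> (\<beta> - \<sigma>) * \<sigma>^q"
    by simp_all
  moreover have "1 / \<sigma> \<le> 7223 / 10000"
    using sigma_bounds sigma_pos by (simp add: field_simps)
  ultimately have "0 \<le> (\<beta> - \<sigma>) * \<sigma>^q + (\<beta> - 1) * ?C - 1 / \<sigma>"
    using beta_bounds[simplified] sigma_bounds[simplified] by linarith
  then show ?thesis unfolding eq using assms beta_pos by simp
qed

lemma leaf_slack_Suc_p:
  assumes "0 \<le> leaf_slack p 0 0" "1 \<le> p"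
  shows "0 \<le> leaf_slack (Suc p) 0 0"
proof -
  have eq: "leaf_slack (Suc p) 0 0 = \<sigma> * leaf_slack p 0 0 + ((\<sigma> - 1) * (real p + 2) - 1)"
    by (simp add: leaf_slack_def algebra_simps)
  have "(\<sigma> - 1) * 3 \<le> (\<sigma> - 1) * (real p + 2)"
    using assms(2) sigma_bounds by (intro mult_left_mono) auto
  then have "0 \<le> (\<sigma> - 1) * (real p + 2) - 1"
    using sigma_bounds by simp
  then show ?thesis unfolding eq using assms sigma_pos by simp
qed

lemma leaf_slack_base:
  "0 \<le> leaf_slack 1 0 0" "0 \<le> leaf_slack 0 1 0" "0 \<le> leaf_slack 0 0 1"
proof -
  show "0 \<le> leaf_slack 1 0 0"
    using sigma_sq beta_pos by (simp add: leaf_slack_def power2_eq_square)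
  have "1.38449 * 1.56508 ^ 2 \<le> \<sigma> * \<beta>^2"
    using sigma_bounds beta_sq_bounds by (intro mult_mono) auto
  moreover have "1 / \<sigma> \<le> 0.7223" "1 / \<sigma>^2 = \<beta> / 3"
    using sigma_bounds sigma_pos sigma_sq beta_pos by (simp_all add: field_simps)
  ultimately show "0 \<le> leaf_slack 0 1 0" "0 \<le> leaf_slack 0 0 1"
    using sigma_bounds beta_bounds by (simp_all add: leaf_slack_def power2_eq_square)
qed

lemma leaf_slack_nonneg:
  assumes "1 \<le> p + q + r"
  shows "0 \<le> leaf_slack p q r"
proof -
  have r_step: "0 \<le> leaf_slack p q r" if "0 \<le> leaf_slack p q r0" "r0 \<le> r" for p q r r0
    using that(2) by (induction r rule: dec_induct) (use that(1) leaf_slack_Suc_r in auto)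
  have q_step: "0 \<le> leaf_slack p q 0" if "0 \<le> leaf_slack p q0 0" "q0 \<le> q" for p q q0
    using that(2) by (induction q rule: dec_induct) (use that(1) leaf_slack_Suc_q in auto)
  have p_step: "0 \<le> leaf_slack p 0 0" if "1 \<le> p" for p
    using that by (induction p rule: dec_induct) (use leaf_slack_Suc_p leaf_slack_base in auto)
  consider "1 \<le> p" | "p = 0" "1 \<le> q" | "p = 0" "q = 0" "1 \<le> r"
    using assms by linarith
  then show ?thesis
  proof cases
    case 1
    then show ?thesis using p_step q_step[of p 0] r_step[of p q 0] by simp
  next
    case 2
    then show ?thesis using leaf_slack_base q_step[of 0 1] r_step[of 0 q 0] by simp
  next
    case 3
    then show ?thesis using leaf_slack_base r_step[of 0 0 1] by simp
  qed
qed

lemma prod_omega_eq: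
  assumes fin: "finite W"
  shows "(\<Prod>w\<in>W. \<omega> (g w)) = \<sigma> ^ card {w \<in> W. g w = 1} * \<beta> ^ card {w \<in> W. 2 \<le> g w}"
proof -
  let ?A0 = "{w \<in> W. g w = 0}" and ?A1 = "{w \<in> W. g w = 1}" and ?A2 = "{w \<in> W. 2 \<le> g w}"
  have "?A0 \<union> (?A1 \<union> ?A2) = W" by auto
  moreover have "(\<Prod>w\<in>?A0 \<union> (?A1 \<union> ?A2). \<omega> (g w))
      = (\<Prod>w\<in>?A0. \<omega> (g w)) * ((\<Prod>w\<in>?A1. \<omega> (g w)) * (\<Prod>w\<in>?A2. \<omega> (g w)))"
    using fin by (simp add: prod.union_disjoint disjoint_iff)
  ultimately have "(\<Prod>w\<in>W. \<omega> (g w))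
      = (\<Prod>w\<in>?A0. \<omega> (g w)) * ((\<Prod>w\<in>?A1. \<omega> (g w)) * (\<Prod>w\<in>?A2. \<omega> (g w)))"
    by simp
  also have "\<dots> = \<sigma> ^ card ?A1 * \<beta> ^ card ?A2"
    by (simp add: \<omega>_def)
  finally show ?thesis .
qed

lemma sum_inverse_sigma_pow_le:
  assumes fin: "finite W" and pos: "\<forall>w\<in>W. 1 \<le> g w"
  shows "(\<Sum>w\<in>W. 1 / \<sigma> ^ (g w - 1)) \<le> real (card {w \<in> W. g w = 1})
    + real (card {w \<in> W. g w = 2}) / \<sigma> + real (card {w \<in> W. 3 \<le> g w}) / \<sigma> ^ 2"
proof -
  let ?A1 = "{w \<in> W. g w = 1}" and ?A2 = "{w \<in> W. g w = 2}" and ?A3 = "{w \<in> W. 3 \<le> g w}"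
  have "?A1 \<union> (?A2 \<union> ?A3) = W" using pos by force
  moreover have "(\<Sum>w\<in>?A1 \<union> (?A2 \<union> ?A3). 1 / \<sigma> ^ (g w - 1))
      = (\<Sum>w\<in>?A1. 1 / \<sigma> ^ (g w - 1)) + ((\<Sum>w\<in>?A2. 1 / \<sigma> ^ (g w - 1)) + (\<Sum>w\<in>?A3. 1 / \<sigma> ^ (g w - 1)))"
    using fin by (simp add: sum.union_disjoint disjoint_iff)
  ultimately have "(\<Sum>w\<in>W. 1 / \<sigma> ^ (g w - 1))
      = (\<Sum>w\<in>?A1. 1 / \<sigma> ^ (g w - 1)) + ((\<Sum>w\<in>?A2. 1 / \<sigma> ^ (g w - 1)) + (\<Sum>w\<in>?A3. 1 / \<sigma> ^ (g w - 1)))"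
    by simp
  moreover have "(\<Sum>w\<in>?A1. 1 / \<sigma> ^ (g w - 1)) = real (card ?A1)"
    "(\<Sum>w\<in>?A2. 1 / \<sigma> ^ (g w - 1)) = real (card ?A2) / \<sigma>"
    by simp_all
  moreover have "(\<Sum>w\<in>?A3. 1 / \<sigma> ^ (g w - 1)) \<le> (\<Sum>w\<in>?A3. 1 / \<sigma> ^ 2)"
  proof (rule sum_mono)
    fix w assume "w \<in> ?A3"
    then have "\<sigma> ^ 2 \<le> \<sigma> ^ (g w - 1)" using sigma_bounds by (intro power_increasing) auto
    then show "1 / \<sigma> ^ (g w - 1) \<le> 1 / \<sigma> ^ 2" using sigma_pos by (intro divide_left_mono) auto
  qed
  ultimately show ?thesis by simp
qed

section \<open>Branching on maximal dissociation sets\<close>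

locale graph_edges =
  fixes E :: "'a \<Rightarrow> 'a \<Rightarrow> bool"
  assumes edge_sym: "E u v \<Longrightarrow> E v u" and edge_irrefl: "\<not> E v v"
begin

definition mds :: "'a set \<Rightarrow> 'a set set" where
  "mds V = {F. maximal_dissociation_set V E F}"

lemma phi_eq_card_mds: "phi V E = card (mds V)"
  by (simp add: phi_def mds_def)

lemma mds_dissociation_set: "F \<in> mds V \<Longrightarrow> dissociation_set V E F"
  by (simp add: mds_def maximal_dissociation_set_def)

lemma mds_subset: "F \<in> mds V \<Longrightarrow> F \<subseteq> V"
  by (simp add: mds_def maximal_dissociation_set_def dissociation_set_def)

lemma finite_mds: "finite V \<Longrightarrow> finite (mds V)"
  by (rule finite_subset[of _ "Pow V"]) (auto dest: mds_subset)

lemma mds_empty: "mds {} = {{}}"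
  by (auto simp: mds_def maximal_dissociation_set_def dissociation_set_def)

lemma finite_neighbors: "finite V \<Longrightarrow> finite (neighbors V E v)"
  by (simp add: neighbors_def)

lemma neighbors_subset: "neighbors V E v \<subseteq> V"
  by (auto simp: neighbors_def)

lemma not_in_neighbors_self: "v \<notin> neighbors V E v"
  using edge_irrefl by (auto simp: neighbors_def)

lemma neighbors_sym: "u \<in> neighbors V E v \<Longrightarrow> v \<in> V \<Longrightarrow> v \<in> neighbors V E u"
  by (auto simp: neighbors_def dest: edge_sym)

lemma neighbors_Diff: "neighbors (V - S) E u = neighbors V E u - S"
  by (auto simp: neighbors_def)

lemma degree_mono: "finite V \<Longrightarrow> W \<subseteq> V \<Longrightarrow> degree W E v \<le> degree V E v"
  unfolding degree_def neighbors_def by (rule card_mono) auto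

lemma degree_Diff_neighbor:
  assumes "finite V" "v \<in> V" "u \<in> neighbors V E v"
  shows "degree (V - {v}) E u = degree V E u - 1"
  unfolding degree_def neighbors_Diff using neighbors_sym[OF assms(3,2)] assms(1)
  by (simp add: finite_neighbors)

lemma card_closed_neighborhood:
  "finite V \<Longrightarrow> card (insert v (neighbors V E v)) = degree V E v + 1"
  using not_in_neighbors_self[of v V] by (simp add: degree_def finite_neighbors)

lemma triangle_free_subset: "triangle_free V E \<Longrightarrow> W \<subseteq> V \<Longrightarrow> triangle_free W E"
  unfolding triangle_free_def by blast

lemma triangle_free_neighbors_disjoint:
  assumes "triangle_free V E" "v \<in> V" "u \<in> neighbors V E v"
  shows "neighbors V E u \<inter> neighbors V E v = {}"
  using assms unfolding triangle_free_def neighbors_def by blast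

lemma card_closed_neighborhood_edge:
  assumes "finite V" "triangle_free V E" "v \<in> V" "u \<in> neighbors V E v"
  shows "card (insert v (neighbors V E v) \<union> insert u (neighbors V E u)) = degree V E v + degree V E u"
proof -
  have "insert v (neighbors V E v) \<union> insert u (neighbors V E u) = neighbors V E v \<union> neighbors V E u"
    using assms(3,4) neighbors_sym[OF assms(4,3)] by auto
  then show ?thesis
    unfolding degree_def using triangle_free_neighbors_disjoint[OF assms(2-4)] assms(1)
    by (simp add: card_Un_disjoint finite_neighbors Int_commute)
qed

lemma dissociation_set_subset:
  assumes "finite F" "dissociation_set V E F" "F' \<subseteq> F"
  shows "dissociation_set V E F'"
  using assms degree_mono[OF assms(1,3)] unfolding dissociation_set_def
  by (meson order_trans subset_iff)

lemma dissociation_set_unique_neighbor: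
  assumes "finite V" "dissociation_set V E F" "v \<in> F" "u \<in> F" "y \<in> F" "E v u" "E v y"
  shows "y = u"
proof (rule ccontr)
  assume "y \<noteq> u"
  have "finite F" using assms(1,2) by (auto simp: dissociation_set_def intro: finite_subset)
  moreover have "{u, y} \<subseteq> neighbors F E v" using assms by (auto simp: neighbors_def)
  ultimately have "card {u, y} \<le> degree F E v"
    unfolding degree_def by (intro card_mono) (auto simp: neighbors_def)
  moreover have "degree F E v \<le> 1" using assms(2,3) by (simp add: dissociation_set_def)
  ultimately show False using \<open>y \<noteq> u\<close> by simp
qed

lemma dissociation_set_edge_no_other_neighbor:
  assumes "finite V" "dissociation_set V E F" "u \<in> F" "v \<in> F" "E u v"
    and "x \<in> {u, v}" "y \<in> F - {u, v}"
  shows "\<not> E x y"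
  using assms dissociation_set_unique_neighbor[OF assms(1,2)] edge_sym by blast

lemma dissociation_set_insert:
  assumes "dissociation_set V E F" "w \<in> V" "w \<notin> F"
    and "card (neighbors F E w) \<le> 1"
    and "\<And>y. y \<in> F \<Longrightarrow> E w y \<Longrightarrow> neighbors F E y = {}"
  shows "dissociation_set V E (insert w F)"
  unfolding dissociation_set_def
proof (intro conjI ballI)
  show "insert w F \<subseteq> V" using assms(1,2) by (auto simp: dissociation_set_def)
  fix y assume y: "y \<in> insert w F"
  consider "y = w" | "y \<in> F" "E y w" | "y \<in> F" "\<not> E y w" using y by blast
  then show "degree (insert w F) E y \<le> 1"
  proof cases
    case 1
    then have "neighbors (insert w F) E y = neighbors F E w" using edge_irrefl by (auto simp: neighbors_def)
    then show ?thesis using assms(4) by (simp add: degree_def)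
  next
    case 2
    then have "neighbors (insert w F) E y = {w}"
      using assms(5)[of y] by (auto simp: neighbors_def dest: edge_sym)
    then show ?thesis by (simp add: degree_def)
  next
    case 3
    then have "neighbors (insert w F) E y = neighbors F E y" by (auto simp: neighbors_def)
    then show ?thesis using assms(1) 3 by (simp add: dissociation_set_def degree_def)
  qed
qed

lemma mds_not_extendable:
  assumes "F \<in> mds V" "w \<in> V" "w \<notin> F"
    and "card (neighbors F E w) \<le> 1"
    and "\<And>y. y \<in> F \<Longrightarrow> E w y \<Longrightarrow> neighbors F E y = {}"
  shows False
proof -
  have "dissociation_set V E (insert w F)"
    by (rule dissociation_set_insert[OF mds_dissociation_set[OF assms(1)] assms(2-5)])
  then show False using assms(1,3) by (auto simp: mds_def maximal_dissociation_set_def)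
qed

lemma dissociation_set_Un_nonadjacent:
  assumes "dissociation_set V E A" "dissociation_set V E B" "\<forall>a\<in>A. \<forall>b\<in>B. \<not> E a b"
  shows "dissociation_set V E (A \<union> B)"
proof -
  have "neighbors (A \<union> B) E w = neighbors A E w" if "w \<in> A" for w
    using that assms(3) by (auto simp: neighbors_def)
  moreover have "neighbors (A \<union> B) E w = neighbors B E w" if "w \<in> B" for w
    using that assms(3) by (auto simp: neighbors_def dest: edge_sym)
  ultimately show ?thesis
    using assms(1,2) unfolding dissociation_set_def degree_def by (metis Un_iff Un_least)
qed

definition set_neighbors :: "'a set \<Rightarrow> 'a set \<Rightarrow> 'a set" where
  "set_neighbors V X = {y \<in> V. \<exists>x\<in>X. E x y}"

lemma set_neighbors_empty [simp]: "set_neighbors V {} = {}"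
  by (simp add: set_neighbors_def)

lemma closed_set_neighbors_singleton: "{v} \<union> set_neighbors V {v} = insert v (neighbors V E v)"
  by (auto simp: set_neighbors_def neighbors_def)

lemma closed_set_neighbors_pair:
  "{u, v} \<union> set_neighbors V {u, v} = insert u (neighbors V E u) \<union> insert v (neighbors V E v)"
  by (auto simp: set_neighbors_def neighbors_def)

lemma maximal_dissociation_set_Diff:
  assumes fin: "finite V" and F: "maximal_dissociation_set V E F" and XF: "X \<subseteq> F"
    and sep: "\<forall>x\<in>X. \<forall>y\<in>F - X. \<not> E x y" and YF: "Y \<inter> F = {}"
  shows "maximal_dissociation_set (V - (X \<union> set_neighbors V X \<union> Y)) E (F - X)"
proof -
  let ?V' = "V - (X \<union> set_neighbors V X \<union> Y)"
  have D: "dissociation_set V E F" and max: "\<And>F'. dissociation_set V E F' \<Longrightarrow> \<not> F \<subset> F'"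
    using F unfolding maximal_dissociation_set_def by blast+
  have FV: "F \<subseteq> V" using D by (simp add: dissociation_set_def)
  have finF: "finite F" using fin FV finite_subset by blast
  have "dissociation_set V E (F - X)" by (rule dissociation_set_subset[OF finF D]) auto
  moreover have "F - X \<subseteq> ?V'"
    using FV sep YF by (auto simp: set_neighbors_def dest: edge_sym)
  ultimately have D': "dissociation_set ?V' E (F - X)" by (auto simp: dissociation_set_def)
  have "\<not> F - X \<subset> F'" if F': "dissociation_set ?V' E F'" for F'
  proof
    assume less: "F - X \<subset> F'"
    have F'V: "F' \<subseteq> ?V'" using F' by (simp add: dissociation_set_def)
    have "dissociation_set V E (F' \<union> X)"
    proof (rule dissociation_set_Un_nonadjacent)
      show "dissociation_set V E F'" using F' by (auto simp: dissociation_set_def)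
      show "dissociation_set V E X" by (rule dissociation_set_subset[OF finF D XF])
      show "\<forall>a\<in>F'. \<forall>b\<in>X. \<not> E a b"
        using F'V by (auto simp: set_neighbors_def dest: edge_sym)
    qed
    moreover have "F \<subset> F' \<union> X" using less F'V by auto
    ultimately show False using max by blast
  qed
  then show ?thesis using D' by (simp add: maximal_dissociation_set_def)
qed

lemma card_mds_le_card_mds_Diff:
  assumes fin: "finite V"
    and P: "\<And>F. F \<in> A \<Longrightarrow> X \<subseteq> F \<and> (\<forall>x\<in>X. \<forall>y\<in>F - X. \<not> E x y) \<and> Y \<inter> F = {}"
    and A: "A \<subseteq> mds V"
  shows "card A \<le> card (mds (V - (X \<union> set_neighbors V X \<union> Y)))"
proof (rule card_inj_on_le[where f = "\<lambda>F. F - X"])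
  show "inj_on (\<lambda>F. F - X) A"
    by (rule inj_onI) (use P in blast)
  show "(\<lambda>F. F - X) ` A \<subseteq> mds (V - (X \<union> set_neighbors V X \<union> Y))"
    using maximal_dissociation_set_Diff[OF fin] P A by (auto simp: mds_def)
  show "finite (mds (V - (X \<union> set_neighbors V X \<union> Y)))"
    using fin by (intro finite_mds) auto
qed

lemma card_mds_avoiding:
  "finite V \<Longrightarrow> card {F \<in> mds V. v \<notin> F} \<le> card (mds (V - {v}))"
  by (rule card_mds_le_card_mds_Diff[of V _ "{}" "{v}", simplified]) auto

lemma card_mds_containing_isolated:
  assumes "finite V"
  shows "card {F \<in> mds V. v \<in> F \<and> neighbors V E v \<inter> F = {}}
    \<le> card (mds (V - insert v (neighbors V E v)))"
proof -
  have "card {F \<in> mds V. v \<in> F \<and> neighbors V E v \<inter> F = {}}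
    \<le> card (mds (V - ({v} \<union> set_neighbors V {v} \<union> {})))"
    by (rule card_mds_le_card_mds_Diff[OF assms])
      (auto dest: mds_subset simp: neighbors_def)
  then show ?thesis by (simp only: Un_empty_right closed_set_neighbors_singleton)
qed

lemma card_mds_containing_edge:
  assumes fin: "finite V" and uv: "E u v"
  shows "card {F \<in> mds V. u \<in> F \<and> v \<in> F}
    \<le> card (mds (V - (insert u (neighbors V E u) \<union> insert v (neighbors V E v))))"
proof -
  have "card {F \<in> mds V. u \<in> F \<and> v \<in> F} \<le> card (mds (V - ({u, v} \<union> set_neighbors V {u, v} \<union> {})))"
  proof (rule card_mds_le_card_mds_Diff[OF fin])
    fix F assume "F \<in> {F \<in> mds V. u \<in> F \<and> v \<in> F}"
    then show "{u, v} \<subseteq> F \<and> (\<forall>x\<in>{u, v}. \<forall>y\<in>F - {u, v}. \<not> E x y) \<and> {} \<inter> F = {}"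
      using dissociation_set_edge_no_other_neighbor[OF fin mds_dissociation_set _ _ uv] by auto
  qed auto
  then show ?thesis by (simp only: Un_empty_right closed_set_neighbors_pair)
qed

lemma mds_leaf_excluded:
  assumes F: "F \<in> mds V" and vV: "v \<in> V" and Nv: "neighbors V E v = {u}" and vF: "v \<notin> F"
  shows "u \<in> F" "\<exists>w\<in>F. E u w"
proof -
  have FV: "F \<subseteq> V" using mds_subset[OF F] .
  have only_u: "y = u" if "y \<in> F" "E v y" for y
    using that FV Nv unfolding neighbors_def by blast
  have NFv: "neighbors F E v \<subseteq> {u}" using only_u unfolding neighbors_def by blast
  have card_NFv: "card (neighbors F E v) \<le> 1"
    using card_mono[OF _ NFv] by simp
  show uF: "u \<in> F"
  proof (rule ccontr)
    assume "u \<notin> F"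
    then have NFv_empty: "neighbors F E v = {}" using NFv neighbors_subset[of F v] by auto
    show False
    proof (rule mds_not_extendable[OF F vV vF card_NFv])
      show "neighbors F E y = {}" if "y \<in> F" "E v y" for y
        using that NFv_empty by (auto simp: neighbors_def)
    qed
  qed
  show "\<exists>w\<in>F. E u w"
  proof (rule ccontr)
    assume no_w: "\<not> (\<exists>w\<in>F. E u w)"
    show False
    proof (rule mds_not_extendable[OF F vV vF card_NFv])
      show "neighbors F E y = {}" if "y \<in> F" "E v y" for y
        using only_u[OF that] no_w unfolding neighbors_def by blast
    qed
  qed
qed

lemma card_mds_isolated_vertex:
  assumes fin: "finite V" and vV: "v \<in> V" and Nv: "neighbors V E v = {}"
  shows "card (mds V) \<le> card (mds (V - {v}))"
proof -
  have "v \<in> F" if F: "F \<in> mds V" for F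
  proof (rule ccontr)
    assume vF: "v \<notin> F"
    have NFv: "neighbors F E v = {}" using Nv mds_subset[OF F] by (auto simp: neighbors_def)
    show False
    proof (rule mds_not_extendable[OF F vV vF])
      show "card (neighbors F E v) \<le> 1" using NFv by simp
      show "neighbors F E y = {}" if "y \<in> F" "E v y" for y
        using that NFv by (auto simp: neighbors_def)
    qed
  qed
  then have all: "mds V = {F \<in> mds V. v \<in> F \<and> neighbors V E v \<inter> F = {}}"
    using Nv by blast
  have "card (mds V) \<le> card (mds (V - insert v (neighbors V E v)))"
    by (subst all) (rule card_mds_containing_isolated[OF fin])
  then show ?thesis using Nv by simp
qed

lemma card_mds_K2_component:
  assumes fin: "finite V" and vV: "v \<in> V" and uV: "u \<in> V"
    and Nv: "neighbors V E v = {u}" and Nu: "neighbors V E u = {v}"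
  shows "card (mds V) \<le> card (mds (V - {u, v}))"
proof -
  have "v \<in> F \<and> u \<in> F" if F: "F \<in> mds V" for F
  proof -
    have "\<not> (\<exists>w\<in>F. E u w)" if "v \<notin> F"
      using that Nu mds_subset[OF F] by (auto simp: neighbors_def)
    moreover have "\<not> (\<exists>w\<in>F. E v w)" if "u \<notin> F"
      using that Nv mds_subset[OF F] by (auto simp: neighbors_def)
    ultimately show ?thesis
      using mds_leaf_excluded(2)[OF F vV Nv] mds_leaf_excluded(2)[OF F uV Nu] by blast
  qed
  then have all: "mds V = {F \<in> mds V. v \<in> F \<and> u \<in> F}" by blast
  have "u \<in> neighbors V E v" using Nv by simp
  then have "E v u" by (simp add: neighbors_def)
  then have "card (mds V) \<le> card (mds (V - (insert v (neighbors V E v) \<union> insert u (neighbors V E u))))"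
    by (subst all) (rule card_mds_containing_edge[OF fin])
  also have "V - (insert v (neighbors V E v) \<union> insert u (neighbors V E u)) = V - {u, v}"
    using Nu Nv by auto
  finally show ?thesis .
qed

lemma card_mds_branch_vertex:
  assumes fin: "finite V"
  shows "card (mds V) \<le> card (mds (V - {v})) + card (mds (V - insert v (neighbors V E v)))
    + (\<Sum>u\<in>neighbors V E v. card (mds (V - (insert v (neighbors V E v) \<union> insert u (neighbors V E u)))))"
proof -
  have "mds V \<subseteq> {F \<in> mds V. v \<notin> F} \<union> {F \<in> mds V. v \<in> F \<and> neighbors V E v \<inter> F = {}}
      \<union> (\<Union>u\<in>neighbors V E v. {F \<in> mds V. v \<in> F \<and> u \<in> F})"
    by blast
  then have "card (mds V) \<le> card {F \<in> mds V. v \<notin> F}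
      + card {F \<in> mds V. v \<in> F \<and> neighbors V E v \<inter> F = {}}
      + (\<Sum>u\<in>neighbors V E v. card {F \<in> mds V. v \<in> F \<and> u \<in> F})"
    by (rule card_le_sum_of_cover) (simp_all add: finite_mds finite_neighbors fin)
  also have "\<dots> \<le> card (mds (V - {v})) + card (mds (V - insert v (neighbors V E v)))
    + (\<Sum>u\<in>neighbors V E v. card (mds (V - (insert v (neighbors V E v) \<union> insert u (neighbors V E u)))))"
  proof (intro add_mono sum_mono)
    fix u assume "u \<in> neighbors V E v"
    then have "E v u" by (simp add: neighbors_def)
    then show "card {F \<in> mds V. v \<in> F \<and> u \<in> F}
      \<le> card (mds (V - (insert v (neighbors V E v) \<union> insert u (neighbors V E u))))"
      by (rule card_mds_containing_edge[OF fin])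
  qed (simp_all add: card_mds_avoiding[OF fin] card_mds_containing_isolated[OF fin])
  finally show ?thesis .
qed

lemma mds_leaf_cases:
  assumes F: "F \<in> mds V" and vV: "v \<in> V" and Nv: "neighbors V E v = {u}"
  shows "v \<in> F \<and> u \<in> F \<or> v \<in> F \<and> neighbors V E v \<inter> F = {}
    \<or> (\<exists>w\<in>neighbors V E u - {v}. w \<in> F \<and> u \<in> F)"
proof (cases "v \<in> F")
  case True
  then show ?thesis using Nv by auto
next
  case False
  obtain w where "w \<in> F" "E u w" using mds_leaf_excluded(2)[OF F vV Nv False] ..
  moreover have "w \<in> V" using \<open>w \<in> F\<close> mds_subset[OF F] by blast
  ultimately have "w \<in> neighbors V E u - {v}" using False by (auto simp: neighbors_def)
  then show ?thesis using \<open>w \<in> F\<close> mds_leaf_excluded(1)[OF F vV Nv False] by blast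
qed

lemma card_mds_branch_leaf:
  assumes fin: "finite V" and vV: "v \<in> V" and Nv: "neighbors V E v = {u}"
  shows "card (mds V) \<le> card (mds (V - insert u (neighbors V E u))) + card (mds (V - {u, v}))
    + (\<Sum>w\<in>neighbors V E u - {v}.
        card (mds (V - (insert w (neighbors V E w) \<union> insert u (neighbors V E u)))))"
proof -
  have "u \<in> neighbors V E v" using Nv by simp
  then have Evu: "E v u" by (simp add: neighbors_def)
  have "mds V \<subseteq> {F \<in> mds V. v \<in> F \<and> u \<in> F} \<union> {F \<in> mds V. v \<in> F \<and> neighbors V E v \<inter> F = {}}
      \<union> (\<Union>w\<in>neighbors V E u - {v}. {F \<in> mds V. w \<in> F \<and> u \<in> F})"
    using mds_leaf_cases[OF _ vV Nv] by blast
  then have "card (mds V) \<le> card {F \<in> mds V. v \<in> F \<and> u \<in> F}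
      + card {F \<in> mds V. v \<in> F \<and> neighbors V E v \<inter> F = {}}
      + (\<Sum>w\<in>neighbors V E u - {v}. card {F \<in> mds V. w \<in> F \<and> u \<in> F})"
    by (rule card_le_sum_of_cover) (simp_all add: finite_mds finite_neighbors fin)
  also have "\<dots> \<le> card (mds (V - insert u (neighbors V E u))) + card (mds (V - {u, v}))
    + (\<Sum>w\<in>neighbors V E u - {v}.
        card (mds (V - (insert w (neighbors V E w) \<union> insert u (neighbors V E u)))))"
  proof (intro add_mono sum_mono)
    have "v \<in> neighbors V E u" using neighbors_sym[of u V v] Nv vV by simp
    then have "insert v (neighbors V E v) \<union> insert u (neighbors V E u) = insert u (neighbors V E u)"
      using Nv by auto
    then show "card {F \<in> mds V. v \<in> F \<and> u \<in> F} \<le> card (mds (V - insert u (neighbors V E u)))"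
      using card_mds_containing_edge[OF fin Evu] by (simp only:)
    have "V - insert v (neighbors V E v) = V - {u, v}" using Nv by auto
    then show "card {F \<in> mds V. v \<in> F \<and> neighbors V E v \<inter> F = {}} \<le> card (mds (V - {u, v}))"
      using card_mds_containing_isolated[OF fin, of v] by (simp only:)
    fix w assume "w \<in> neighbors V E u - {v}"
    then have "E u w" by (simp add: neighbors_def)
    then have "E w u" by (rule edge_sym)
    then show "card {F \<in> mds V. w \<in> F \<and> u \<in> F}
      \<le> card (mds (V - (insert w (neighbors V E w) \<union> insert u (neighbors V E u))))"
      by (rule card_mds_containing_edge[OF fin])
  qed
  finally show ?thesis .
qed

lemma degree_Diff_lost_neighbor:
  assumes "finite V" "s \<in> S" "s \<in> neighbors V E t"
  shows "degree (V - S) E t \<le> degree V E t - 1"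
proof -
  have "degree (V - S) E t \<le> card (neighbors V E t - {s})"
    unfolding degree_def neighbors_Diff using assms
    by (intro card_mono) (auto simp: finite_neighbors)
  then show ?thesis using assms by (simp add: degree_def finite_neighbors)
qed

lemma degree_Diff_non_neighbor:
  assumes "w \<in> V" "w \<notin> neighbors V E v"
  shows "degree (V - {v}) E w = degree V E w"
proof -
  have "v \<notin> neighbors V E w" using assms neighbors_sym[of v V w] by blast
  then show ?thesis by (simp add: degree_def neighbors_Diff)
qed

lemma triangle_free_not_adjacent_neighbors:
  assumes "triangle_free V E" "v \<in> V" "u \<in> neighbors V E v" "w \<in> neighbors V E v"
  shows "w \<notin> neighbors V E u"
  using assms unfolding triangle_free_def neighbors_def by blast

section \<open>The weight bound\<close>

definition weight :: "'a set \<Rightarrow> real" where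
  "weight V = (\<Prod>v\<in>V. \<omega> (degree V E v))"

lemma weight_pos: "weight V > 0"
  unfolding weight_def by (rule prod_pos) (simp add: omega_pos)

lemma weight_empty: "weight {} = 1"
  by (simp add: weight_def)

lemma prod_omega_high_degree:
  assumes "\<forall>s\<in>S. 2 \<le> degree V E s"
  shows "(\<Prod>s\<in>S. \<omega> (degree V E s)) = \<beta> ^ card S"
  using assms by (simp add: omega_ge2)

text \<open>Deleting \<open>S\<close> removes the factors of \<open>S\<close> and can only lower the other degrees; on a set \<open>T\<close>
  of remaining vertices the new factors are kept exactly.\<close>
lemma weight_Diff_mult_le:
  assumes fin: "finite V" and SV: "S \<subseteq> V" and TS: "T \<subseteq> V - S"
  shows "weight (V - S) * (\<Prod>s\<in>S. \<omega> (degree V E s)) * (\<Prod>t\<in>T. \<omega> (degree V E t))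
    \<le> weight V * (\<Prod>t\<in>T. \<omega> (degree (V - S) E t))"
proof -
  let ?f = "\<lambda>t. \<omega> (degree V E t)" and ?g = "\<lambda>t. \<omega> (degree (V - S) E t)"
  have fin': "finite (V - S)" using fin by simp
  have "prod ?g (V - S - T) \<le> prod ?f (V - S - T)"
    by (rule prod_mono) (auto intro!: omega_mono degree_mono fin less_imp_le[OF omega_pos])
  then have "weight (V - S) \<le> prod ?f (V - S - T) * prod ?g T"
    unfolding weight_def prod.subset_diff[OF TS fin']
    by (intro mult_right_mono) (simp_all add: prod_nonneg less_imp_le[OF omega_pos])
  then have "weight (V - S) * prod ?f S * prod ?f T \<le> (prod ?f (V - S - T) * prod ?g T) * prod ?f S * prod ?f T"
    by (intro mult_right_mono) (simp_all add: prod_nonneg less_imp_le[OF omega_pos])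
  also have "\<dots> = weight V * prod ?g T"
    unfolding weight_def prod.subset_diff[OF SV fin, of ?f] prod.subset_diff[OF TS fin', of ?f]
    by (simp add: algebra_simps)
  finally show ?thesis .
qed

lemma weight_Diff_le:
  assumes "finite V" "S \<subseteq> V" "X \<le> (\<Prod>s\<in>S. \<omega> (degree V E s))"
  shows "weight (V - S) * X \<le> weight V"
proof -
  have "weight (V - S) * X \<le> weight (V - S) * (\<Prod>s\<in>S. \<omega> (degree V E s))"
    using assms(3) weight_pos by (intro mult_left_mono) (auto simp: less_imp_le)
  also have "\<dots> \<le> weight V" using weight_Diff_mult_le[OF assms(1,2), of "{}"] by simp
  finally show ?thesis .
qed

lemma weight_Diff_le_weight: "finite V \<Longrightarrow> S \<subseteq> V \<Longrightarrow> weight (V - S) \<le> weight V"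
  using weight_Diff_le[of V S 1] prod_ge_1[of S "\<lambda>s. \<omega> (degree V E s)"] one_le_omega by simp

lemma weight_Diff_le_high_degree:
  assumes fin: "finite V" and SV: "S \<subseteq> V" and TS: "T \<subseteq> V - S"
    and deg_ge2: "\<forall>s\<in>S \<union> T. 2 \<le> degree V E s" and deg_le: "\<forall>t\<in>T. degree (V - S) E t \<le> c"
  shows "weight (V - S) \<le> weight V * \<omega> c ^ card T / \<beta> ^ (card S + card T)"
proof -
  have "(\<Prod>t\<in>T. \<omega> (degree (V - S) E t)) \<le> (\<Prod>t\<in>T. \<omega> c)"
    by (rule prod_mono) (use deg_le omega_mono omega_pos in \<open>auto simp: less_imp_le\<close>)
  then have "weight (V - S) * \<beta> ^ card S * \<beta> ^ card T \<le> weight V * \<omega> c ^ card T"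
    using weight_Diff_mult_le[OF fin SV TS] weight_pos deg_ge2
    by (simp add: prod_omega_high_degree mult_left_mono order_trans less_imp_le)
  then show ?thesis
    using beta_pos by (simp add: power_add field_simps)
qed

lemma weight_Diff_closed_neighborhood:
  assumes fin: "finite V" and vV: "v \<in> V" and deg_ge2: "\<forall>w\<in>V. 2 \<le> degree V E w"
  shows "weight (V - insert v (neighbors V E v)) \<le> weight V / \<beta> ^ (degree V E v + 1)"
  using weight_Diff_le_high_degree[OF fin, of "insert v (neighbors V E v)" "{}"] vV
    neighbors_subset[of V v] deg_ge2 card_closed_neighborhood[OF fin]
  by auto

lemma weight_Diff_closed_neighborhood_edge:
  assumes fin: "finite V" and tf: "triangle_free V E" and vV: "v \<in> V"
    and deg_ge2: "\<forall>w\<in>V. 2 \<le> degree V E w" and u: "u \<in> neighbors V E v"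
  shows "weight (V - (insert v (neighbors V E v) \<union> insert u (neighbors V E u)))
    \<le> weight V / \<beta> ^ (degree V E v + degree V E u)"
proof -
  have "u \<in> V" using u neighbors_subset by blast
  then show ?thesis
    using weight_Diff_le_high_degree[OF fin, of "insert v (neighbors V E v) \<union> insert u (neighbors V E u)" "{}"]
      vV neighbors_subset[of V v] neighbors_subset[of V u] deg_ge2
      card_closed_neighborhood_edge[OF fin tf vV u]
    by auto
qed

lemma sum_inverse_beta_pow_le:
  assumes "finite N" "\<forall>u\<in>N. k \<le> g u"
  shows "(\<Sum>u\<in>N. 1 / \<beta> ^ (D + g u)) \<le> real (card N) / \<beta> ^ (D + k)"
proof -
  have "(\<Sum>u\<in>N. 1 / \<beta> ^ (D + g u)) \<le> (\<Sum>u\<in>N. 1 / \<beta> ^ (D + k))"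
  proof (rule sum_mono)
    fix u assume "u \<in> N"
    then have "\<beta> ^ (D + k) \<le> \<beta> ^ (D + g u)"
      using assms(2) beta_bounds by (intro power_increasing) auto
    then show "1 / \<beta> ^ (D + g u) \<le> 1 / \<beta> ^ (D + k)"
      using beta_pos by (intro divide_left_mono) auto
  qed
  then show ?thesis by simp
qed

lemma real_card_mds_branch_vertex:
  "finite V \<Longrightarrow> real (card (mds V)) \<le> real (card (mds (V - {v})))
    + real (card (mds (V - insert v (neighbors V E v))))
    + (\<Sum>u\<in>neighbors V E v. real (card (mds (V - (insert v (neighbors V E v) \<union> insert u (neighbors V E u))))))"
  using card_mds_branch_vertex[of V v]
  unfolding of_nat_sum[symmetric] of_nat_add[symmetric] of_nat_le_iff .

lemma mds_branch_vertex_bound: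
  assumes fin: "finite V" and tf: "triangle_free V E"
    and IH: "\<And>W. W \<subset> V \<Longrightarrow> real (card (mds W)) \<le> weight W"
    and vV: "v \<in> V" and deg_ge2: "\<forall>w\<in>V. 2 \<le> degree V E w"
    and m: "m = card {u \<in> neighbors V E v. degree V E u = 2}"
  shows "real (card (mds V)) \<le> weight V * (\<sigma> ^ m / \<beta> ^ (m + 1) + 1 / \<beta> ^ (degree V E v + 1)
    + (\<Sum>u\<in>neighbors V E v. 1 / \<beta> ^ (degree V E v + degree V E u)))"
proof -
  let ?N = "neighbors V E v" and ?D = "degree V E v"
  let ?N2 = "{u \<in> ?N. degree V E u = 2}"
  have "weight (V - {v}) \<le> weight V * \<omega> 1 ^ card ?N2 / \<beta> ^ (card {v} + card ?N2)"
  proof (rule weight_Diff_le_high_degree[OF fin])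
    show "\<forall>t\<in>?N2. degree (V - {v}) E t \<le> 1"
      using degree_Diff_neighbor[OF fin vV] by auto
  qed (use vV deg_ge2 neighbors_subset[of V v] not_in_neighbors_self[of v V] in auto)
  then have del_v: "weight (V - {v}) \<le> weight V * (\<sigma> ^ m / \<beta> ^ (m + 1))"
    by (simp add: m \<omega>_def)
  have "real (card (mds V)) \<le> weight (V - {v}) + weight (V - insert v ?N)
    + (\<Sum>u\<in>?N. weight (V - (insert v ?N \<union> insert u (neighbors V E u))))"
  proof -
    have "real (card (mds W)) \<le> weight W" if "v \<in> V - W" "W \<subseteq> V" for W
      using that by (intro IH) auto
    then have "real (card (mds (V - {v}))) + real (card (mds (V - insert v ?N)))
      + (\<Sum>u\<in>?N. real (card (mds (V - (insert v ?N \<union> insert u (neighbors V E u))))))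
      \<le> weight (V - {v}) + weight (V - insert v ?N)
      + (\<Sum>u\<in>?N. weight (V - (insert v ?N \<union> insert u (neighbors V E u))))"
      using vV by (intro add_mono sum_mono) auto
    then show ?thesis using real_card_mds_branch_vertex[OF fin, of v] by linarith
  qed
  also have "\<dots> \<le> weight V * (\<sigma> ^ m / \<beta> ^ (m + 1)) + weight V / \<beta> ^ (?D + 1)
    + (\<Sum>u\<in>?N. weight V / \<beta> ^ (?D + degree V E u))"
    using del_v weight_Diff_closed_neighborhood[OF fin vV deg_ge2]
      weight_Diff_closed_neighborhood_edge[OF fin tf vV deg_ge2]
    by (intro add_mono sum_mono) auto
  also have "\<dots> = weight V * (\<sigma> ^ m / \<beta> ^ (m + 1) + 1 / \<beta> ^ (?D + 1)
    + (\<Sum>u\<in>?N. 1 / \<beta> ^ (?D + degree V E u)))"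
    by (simp add: algebra_simps sum_distrib_left)
  finally show ?thesis .
qed

lemma mds_bound_high_degree:
  assumes fin: "finite V" and tf: "triangle_free V E"
    and IH: "\<And>W. W \<subset> V \<Longrightarrow> real (card (mds W)) \<le> weight W"
    and vV: "v \<in> V" and deg_ge2: "\<forall>w\<in>V. 2 \<le> degree V E w" and deg_v: "4 \<le> degree V E v"
  shows "real (card (mds V)) \<le> weight V"
proof -
  let ?N = "neighbors V E v" and ?D = "degree V E v"
  define m where "m = card {u \<in> ?N. degree V E u = 2}"
  have finN: "finite ?N" using fin by (simp add: finite_neighbors)
  have deg_N: "\<forall>u\<in>?N. 2 \<le> degree V E u" using deg_ge2 neighbors_subset[of V v] by auto
  have "\<sigma> ^ m / \<beta> ^ (m + 1) + 1 / \<beta> ^ (?D + 1) + (\<Sum>u\<in>?N. 1 / \<beta> ^ (?D + degree V E u)) \<le> 1"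
    (is "?K \<le> 1")
  proof (cases "m = 0")
    case True
    then have "\<forall>u\<in>?N. degree V E u \<noteq> 2"
      using finN by (simp add: m_def)
    then have "\<forall>u\<in>?N. 3 \<le> degree V E u"
      using deg_N by force
    then have "(\<Sum>u\<in>?N. 1 / \<beta> ^ (?D + degree V E u)) \<le> real ?D / \<beta> ^ (?D + 3)"
      using sum_inverse_beta_pow_le[OF finN] by (simp add: degree_def)
    then show ?thesis
      using True high_degree_no_deg2_branching_bound[OF deg_v] by simp
  next
    case False
    have "(\<Sum>u\<in>?N. 1 / \<beta> ^ (?D + degree V E u)) \<le> real ?D / \<beta> ^ (?D + 2)"
      using sum_inverse_beta_pow_le[OF finN deg_N] by (simp add: degree_def)
    then show ?thesis
      using False high_degree_branching_bound[OF deg_v, of m] by simp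
  qed
  then have "weight V * ?K \<le> weight V * 1"
    by (rule mult_left_mono[OF _ less_imp_le[OF weight_pos]])
  then show ?thesis
    using mds_branch_vertex_bound[OF fin tf IH vV deg_ge2 m_def] by simp
qed

text \<open>The stronger factor \<open>0.975\<close> is what makes the cubic case work, where this lemma is
  applied to the graph with one vertex deleted.\<close>
lemma mds_bound_deg3_with_deg2_neighbor:
  assumes fin: "finite V" and tf: "triangle_free V E"
    and IH: "\<And>W. W \<subset> V \<Longrightarrow> real (card (mds W)) \<le> weight W"
    and vV: "v \<in> V" and deg_ge2: "\<forall>w\<in>V. 2 \<le> degree V E w" and deg_v: "degree V E v = 3"
    and deg2_nb: "\<exists>u\<in>neighbors V E v. degree V E u = 2"
  shows "real (card (mds V)) \<le> 0.975 * weight V"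
proof -
  let ?N = "neighbors V E v"
  let ?N2 = "{u \<in> ?N. degree V E u = 2}"
  define m where "m = card ?N2"
  have finN: "finite ?N" and card_N: "card ?N = 3"
    using fin deg_v by (simp_all add: finite_neighbors degree_def)
  have deg_N: "\<forall>u\<in>?N. 2 \<le> degree V E u" using deg_ge2 neighbors_subset[of V v] by auto
  have m_le: "m \<le> 3" unfolding m_def using card_mono[OF finN, of ?N2] card_N by auto
  have m_ge: "1 \<le> m" unfolding m_def using deg2_nb finN by (auto simp: Suc_le_eq card_gt_0_iff)
  have "(\<Sum>u\<in>?N. 1 / \<beta> ^ (3 + degree V E u))
      = (\<Sum>u\<in>?N2. 1 / \<beta> ^ (3 + degree V E u)) + (\<Sum>u\<in>?N - ?N2. 1 / \<beta> ^ (3 + degree V E u))"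
    using finN by (simp add: sum.subset_diff[of ?N2 ?N] add.commute)
  also have "\<dots> \<le> real m / \<beta> ^ 5 + real (3 - m) / \<beta> ^ 6"
  proof (rule add_mono)
    show "(\<Sum>u\<in>?N2. 1 / \<beta> ^ (3 + degree V E u)) \<le> real m / \<beta> ^ 5"
      by (simp add: m_def)
    have "card (?N - ?N2) = 3 - m"
      using finN card_N by (simp add: m_def card_Diff_subset)
    moreover have "\<forall>u\<in>?N - ?N2. 3 \<le> degree V E u" using deg_N by force
    ultimately show "(\<Sum>u\<in>?N - ?N2. 1 / \<beta> ^ (3 + degree V E u)) \<le> real (3 - m) / \<beta> ^ 6"
      using sum_inverse_beta_pow_le[of "?N - ?N2" 3 "degree V E" 3] finN by simp
  qed
  finally have "(\<Sum>u\<in>?N. 1 / \<beta> ^ (3 + degree V E u)) \<le> real m / \<beta> ^ 5 + real (3 - m) / \<beta> ^ 6" .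
  then have "\<sigma> ^ m / \<beta> ^ (m + 1) + 1 / \<beta> ^ 4
      + (\<Sum>u\<in>?N. 1 / \<beta> ^ (3 + degree V E u)) \<le> 0.975" (is "?K \<le> _")
    using deg3_branching_bound[OF m_ge m_le] by linarith
  then have "weight V * ?K \<le> weight V * 0.975"
    by (rule mult_left_mono[OF _ less_imp_le[OF weight_pos]])
  moreover have "\<beta> ^ (3 + 1) = \<beta> ^ 4" by simp
  then have "real (card (mds V)) \<le> weight V * ?K"
    using mds_branch_vertex_bound[OF fin tf IH vV deg_ge2 m_def] by (simp only: deg_v)
  ultimately show ?thesis by (simp add: mult.commute)
qed

lemma mds_Diff_cubic_vertex_le:
  assumes fin: "finite V" and tf: "triangle_free V E"
    and IH: "\<And>W. W \<subset> V \<Longrightarrow> real (card (mds W)) \<le> weight W"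
    and vV: "v \<in> V" and deg_ge2: "\<forall>w\<in>V. 2 \<le> degree V E w" and deg_v: "degree V E v = 3"
    and deg_N: "\<forall>u\<in>neighbors V E v. degree V E u = 3"
    and u: "u \<in> neighbors V E v" and z: "z \<in> neighbors V E u" and zv: "z \<noteq> v"
    and deg_z: "degree V E z = 3"
  shows "real (card (mds (V - {v}))) \<le> weight V * (0.975 / \<beta>)"
proof -
  define H where "H = V - {v}"
  have uV: "u \<in> V" and zV: "z \<in> V" using u z neighbors_subset by blast+
  have z_not_N: "z \<notin> neighbors V E v"
    using triangle_free_not_adjacent_neighbors[OF tf vV u] z edge_sym by (auto simp: neighbors_def)
  have deg_H: "2 \<le> degree H E w" if "w \<in> H" for w
  proof (cases "w \<in> neighbors V E v")
    case True
    then show ?thesis using degree_Diff_neighbor[OF fin vV True] deg_N by (simp add: H_def)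
  next
    case False
    then show ?thesis using that deg_ge2 degree_Diff_non_neighbor[of w V v] by (simp add: H_def)
  qed
  have "u \<in> neighbors H E z"
    using z uV zv not_in_neighbors_self[of v V] u neighbors_sym[OF z uV] by (auto simp: H_def neighbors_def)
  moreover have "degree H E u = 2"
    using degree_Diff_neighbor[OF fin vV u] deg_N u by (simp add: H_def)
  moreover have "z \<in> H" "degree H E z = 3"
    using zV zv degree_Diff_non_neighbor[OF zV z_not_N] deg_z by (simp_all add: H_def)
  ultimately have "real (card (mds H)) \<le> 0.975 * weight H"
    using mds_bound_deg3_with_deg2_neighbor[of H z] fin tf IH deg_H
    by (auto simp: H_def intro: triangle_free_subset)
  then have "real (card (mds H)) * \<beta> \<le> 0.975 * (weight H * \<beta>)"
    using beta_pos by (simp add: mult_right_mono)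
  also have "\<dots> \<le> 0.975 * weight V"
    using weight_Diff_le[OF fin, of "{v}" \<beta>] vV deg_v by (simp add: H_def \<omega>_def mult.commute)
  finally show ?thesis
    using beta_pos unfolding H_def by (simp add: field_simps)
qed

lemma mds_bound_cubic_vertex:
  assumes fin: "finite V" and tf: "triangle_free V E"
    and IH: "\<And>W. W \<subset> V \<Longrightarrow> real (card (mds W)) \<le> weight W"
    and vV: "v \<in> V" and deg_ge2: "\<forall>w\<in>V. 2 \<le> degree V E w" and deg_v: "degree V E v = 3"
    and cubic_nbrs: "\<forall>w\<in>V. degree V E w = 3 \<longrightarrow> (\<forall>u\<in>neighbors V E w. degree V E u = 3)"
  shows "real (card (mds V)) \<le> weight V"
proof -
  have deg_N: "\<forall>u\<in>neighbors V E v. degree V E u = 3" using cubic_nbrs vV deg_v by blast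
  obtain u where u: "u \<in> neighbors V E v"
    using deg_v by (metis card.empty degree_def ex_in_conv zero_neq_numeral)
  have uV: "u \<in> V" and deg_u: "degree V E u = 3" using u neighbors_subset deg_N by blast+
  have "\<not> neighbors V E u \<subseteq> {v}"
    using deg_u card_mono[of "{v}" "neighbors V E u"] by (auto simp: degree_def)
  then obtain z where z: "z \<in> neighbors V E u" "z \<noteq> v" by blast
  then have "degree V E z = 3" using cubic_nbrs uV deg_u by blast
  then have del_v: "real (card (mds (V - {v}))) \<le> weight V * (0.975 / \<beta>)"
    using mds_Diff_cubic_vertex_le[OF fin tf _ vV deg_ge2 deg_v deg_N u z(1) z(2)] IH by blast
  have del_N: "real (card (mds (V - insert v (neighbors V E v)))) \<le> weight V / \<beta> ^ 4"
    using IH[of "V - insert v (neighbors V E v)"] vV deg_v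
      weight_Diff_closed_neighborhood[OF fin vV deg_ge2] by fastforce
  have "real (card (mds (V - (insert v (neighbors V E v) \<union> insert w (neighbors V E w)))))
      \<le> weight V / \<beta> ^ 6" if w: "w \<in> neighbors V E v" for w
    using IH[of "V - (insert v (neighbors V E v) \<union> insert w (neighbors V E w))"] vV
      weight_Diff_closed_neighborhood_edge[OF fin tf vV deg_ge2 w] deg_v deg_N w by fastforce
  then have "(\<Sum>w\<in>neighbors V E v. real (card (mds (V - (insert v (neighbors V E v) \<union> insert w (neighbors V E w))))))
      \<le> (\<Sum>w\<in>neighbors V E v. weight V / \<beta> ^ 6)"
    by (rule sum_mono)
  then have "real (card (mds V)) \<le> weight V * (0.975 / \<beta>) + weight V / \<beta> ^ 4
      + (\<Sum>w\<in>neighbors V E v. weight V / \<beta> ^ 6)"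
    using real_card_mds_branch_vertex[OF fin, of v] del_v del_N by linarith
  also have "\<dots> = weight V * (0.975 / \<beta> + 1 / \<beta>^4 + 3 / \<beta>^6)"
    using deg_v by (simp add: degree_def algebra_simps)
  also have "\<dots> \<le> weight V"
    using cubic_branching_bound mult_left_mono[OF _ less_imp_le[OF weight_pos]] by fastforce
  finally show ?thesis .
qed

lemma two_regular_local_structure:
  assumes fin: "finite V" and tf: "triangle_free V E"
    and deg2: "\<forall>w\<in>V. degree V E w = 2" and vV: "v \<in> V"
  obtains u1 u2 z1 z2 where "neighbors V E v = {u1, u2}" "u1 \<noteq> u2"
    "neighbors V E u1 = {v, z1}" "neighbors V E u2 = {v, z2}"
    "z1 \<notin> {v, u1, u2}" "z2 \<notin> {v, u1, u2}"
proof -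
  have card_N: "card (neighbors V E w) = 2" if "w \<in> V" for w
    using deg2 that by (simp add: degree_def)
  obtain u1 u2 where Nv: "neighbors V E v = {u1, u2}" and u12: "u1 \<noteq> u2"
    using card_N[OF vV] by (auto simp: card_2_iff)
  have u1: "u1 \<in> neighbors V E v" and u2: "u2 \<in> neighbors V E v" using Nv by auto
  have u1V: "u1 \<in> V" and u2V: "u2 \<in> V" using u1 u2 neighbors_subset by blast+
  obtain z1 where Nu1: "neighbors V E u1 = {v, z1}" and "z1 \<noteq> v"
    using card_2_obtain[OF finite_neighbors[OF fin] card_N[OF u1V] neighbors_sym[OF u1 vV]] .
  obtain z2 where Nu2: "neighbors V E u2 = {v, z2}" and "z2 \<noteq> v"
    using card_2_obtain[OF finite_neighbors[OF fin] card_N[OF u2V] neighbors_sym[OF u2 vV]] .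
  have "z1 \<noteq> u1" "z2 \<noteq> u2"
    using not_in_neighbors_self[of u1 V] not_in_neighbors_self[of u2 V] Nu1 Nu2 by auto
  moreover have "z1 \<noteq> u2" "z2 \<noteq> u1"
    using triangle_free_not_adjacent_neighbors[OF tf vV u1 u2]
      triangle_free_not_adjacent_neighbors[OF tf vV u2 u1] Nu1 Nu2 by auto
  ultimately show ?thesis
    using that[OF Nv u12 Nu1 Nu2] \<open>z1 \<noteq> v\<close> \<open>z2 \<noteq> v\<close> by blast
qed

lemma weight_Diff_two_regular:
  assumes fin: "finite V" and deg2: "\<forall>w\<in>V. degree V E w = 2"
    and SV: "S \<subseteq> V" and TS: "T \<subseteq> V - S" and lost: "\<forall>t\<in>T. \<exists>s\<in>S. s \<in> neighbors V E t"
  shows "weight (V - S) \<le> weight V * \<sigma> ^ card T / \<beta> ^ (card S + card T)"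
proof -
  have "weight (V - S) \<le> weight V * \<omega> 1 ^ card T / \<beta> ^ (card S + card T)"
  proof (rule weight_Diff_le_high_degree[OF fin SV TS])
    show "\<forall>s\<in>S \<union> T. 2 \<le> degree V E s" using deg2 SV TS by auto
    show "\<forall>t\<in>T. degree (V - S) E t \<le> 1"
    proof
      fix t assume "t \<in> T"
      then obtain s where "s \<in> S" "s \<in> neighbors V E t" using lost by blast
      then have "degree (V - S) E t \<le> degree V E t - 1" by (rule degree_Diff_lost_neighbor[OF fin])
      then show "degree (V - S) E t \<le> 1" using deg2 TS \<open>t \<in> T\<close> by auto
    qed
  qed
  then show ?thesis by (simp add: \<omega>_def)
qed

lemma mds_two_regular_branch:
  assumes fin: "finite V"
    and IH: "\<And>W. W \<subset> V \<Longrightarrow> real (card (mds W)) \<le> weight W"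
    and vV: "v \<in> V" and deg2: "\<forall>w\<in>V. degree V E w = 2"
    and Nv: "neighbors V E v = {u1, u2}" and u12: "u1 \<noteq> u2"
    and Nu1: "neighbors V E u1 = {v, z1}" and Nu2: "neighbors V E u2 = {v, z2}"
  shows "real (card (mds V)) \<le> weight V * \<sigma> ^ 2 / \<beta> ^ 3 + weight (V - {v, u1, u2})
    + weight (V - {v, u1, u2, z1}) + weight (V - {v, u1, u2, z2})"
proof -
  have u1: "u1 \<in> neighbors V E v" and u2: "u2 \<in> neighbors V E v" using Nv by auto
  have "weight (V - {v}) \<le> weight V * \<sigma> ^ card {u1, u2} / \<beta> ^ (card {v} + card {u1, u2})"
  proof (rule weight_Diff_two_regular[OF fin deg2])
    show "{v} \<subseteq> V" "{u1, u2} \<subseteq> V - {v}"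
      using vV u1 u2 neighbors_subset[of V v] not_in_neighbors_self[of v V] by auto
    show "\<forall>t\<in>{u1, u2}. \<exists>s\<in>{v}. s \<in> neighbors V E t"
      using neighbors_sym[OF u1 vV] neighbors_sym[OF u2 vV] by simp
  qed
  then have "weight (V - {v}) \<le> weight V * \<sigma> ^ 2 / \<beta> ^ 3"
    using u12 by (simp add: numeral_eq_Suc)
  moreover have "real (card (mds (V - {v}))) \<le> weight (V - {v})"
    using vV by (intro IH) auto
  ultimately have del_v: "real (card (mds (V - {v}))) \<le> weight V * \<sigma> ^ 2 / \<beta> ^ 3"
    by linarith
  have S: "insert v (neighbors V E v) = {v, u1, u2}"
    "insert v (neighbors V E v) \<union> insert u1 (neighbors V E u1) = {v, u1, u2, z1}"
    "insert v (neighbors V E v) \<union> insert u2 (neighbors V E u2) = {v, u1, u2, z2}"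
    using Nv Nu1 Nu2 by auto
  have IH': "real (card (mds (V - W))) \<le> weight (V - W)" if "v \<in> W" for W
    using that vV by (intro IH) auto
  have "real (card (mds V)) \<le> real (card (mds (V - {v}))) + real (card (mds (V - {v, u1, u2})))
      + real (card (mds (V - {v, u1, u2, z1}))) + real (card (mds (V - {v, u1, u2, z2})))"
  proof -
    let ?r = "\<lambda>u. real (card (mds (V - (insert v (neighbors V E v) \<union> insert u (neighbors V E u)))))"
    have "(\<Sum>u\<in>neighbors V E v. ?r u) = ?r u1 + ?r u2" using Nv u12 by simp
    then show ?thesis
      unfolding S[symmetric] using real_card_mds_branch_vertex[OF fin, of v] by linarith
  qed
  then show ?thesis
    using del_v IH'[of "{v, u1, u2}"] IH'[of "{v, u1, u2, z1}"] IH'[of "{v, u1, u2, z2}"] by simp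
qed

lemma two_regular_four_cycle_weights:
  assumes fin: "finite V" and tf: "triangle_free V E"
    and vV: "v \<in> V" and deg2: "\<forall>w\<in>V. degree V E w = 2"
    and Nv: "neighbors V E v = {u1, u2}" and u12: "u1 \<noteq> u2"
    and Nu1: "neighbors V E u1 = {v, z1}" and Nu2: "neighbors V E u2 = {v, z2}"
    and z1: "z1 \<notin> {v, u1, u2}" and z2: "z2 \<notin> {v, u1, u2}"
    and z12: "z1 = z2"
  shows "weight V * \<sigma> ^ 2 / \<beta> ^ 3 + weight (V - {v, u1, u2}) + weight (V - {v, u1, u2, z1})
    + weight (V - {v, u1, u2, z2}) \<le> weight V"
proof -
  let ?W = "weight V"
  have u1: "u1 \<in> neighbors V E v" and u2: "u2 \<in> neighbors V E v" using Nv by auto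
  have deg_ge2: "\<forall>w\<in>V. 2 \<le> degree V E w" using deg2 by simp
  have VV: "{v, u1, u2, z1, z2} \<subseteq> V" using vV Nv Nu1 Nu2 neighbors_subset by blast
  have u1_z1: "u1 \<in> neighbors V E z1" and u2_z2: "u2 \<in> neighbors V E z2"
    using neighbors_sym[of z1 V u1] neighbors_sym[of z2 V u2] Nu1 Nu2 VV by auto
  have "v \<noteq> u1" "v \<noteq> u2" using Nv not_in_neighbors_self[of v V] by auto
  then have card3: "card {v, u1, u2} = 3" using u12 by simp
  have "neighbors V E z1 = {u1, u2}"
  proof (rule card_subset_eq[symmetric])
    show "{u1, u2} \<subseteq> neighbors V E z1" using u1_z1 u2_z2 z12 by simp
    show "card {u1, u2} = card (neighbors V E z1)"
      using u12 deg2 VV by (simp add: degree_def)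
  qed (simp add: finite_neighbors fin)
  then have "weight (V - {v, u1, u2}) \<le> ?W * \<omega> 0 ^ card {z1} / \<beta> ^ (card {v, u1, u2} + card {z1})"
    using z1 VV deg2 u12
    by (intro weight_Diff_le_high_degree[OF fin]) (simp_all add: degree_def neighbors_Diff)
  then have "weight (V - {v, u1, u2}) \<le> ?W / \<beta> ^ 4"
    using card3 by (simp add: \<omega>_def)
  moreover have "weight (V - {v, u1, u2, z1}) \<le> ?W / \<beta> ^ 4"
    using weight_Diff_closed_neighborhood_edge[OF fin tf vV deg_ge2 u1] VV deg2 Nv Nu1
    by (simp add: insert_commute)
  moreover have "weight (V - {v, u1, u2, z2}) \<le> ?W / \<beta> ^ 4"
    using weight_Diff_closed_neighborhood_edge[OF fin tf vV deg_ge2 u2] VV deg2 Nv Nu2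
    by (simp add: insert_commute)
  moreover have "?W * (\<sigma> ^ 2 / \<beta> ^ 3 + 3 / \<beta> ^ 4) \<le> ?W"
    using four_cycle_branching_bound mult_left_mono[OF _ less_imp_le[OF weight_pos]] by fastforce
  moreover have "?W * (\<sigma> ^ 2 / \<beta> ^ 3 + 3 / \<beta> ^ 4) = ?W * \<sigma> ^ 2 / \<beta> ^ 3 + 3 * (?W / \<beta> ^ 4)"
    by (simp add: algebra_simps)
  ultimately show ?thesis by linarith
qed

lemma two_regular_long_cycle_weights:
  assumes fin: "finite V" and tf: "triangle_free V E"
    and vV: "v \<in> V" and deg2: "\<forall>w\<in>V. degree V E w = 2"
    and Nv: "neighbors V E v = {u1, u2}" and u12: "u1 \<noteq> u2"
    and Nu1: "neighbors V E u1 = {v, z1}" and Nu2: "neighbors V E u2 = {v, z2}"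
    and z1: "z1 \<notin> {v, u1, u2}" and z2: "z2 \<notin> {v, u1, u2}"
    and z12: "z1 \<noteq> z2"
  shows "weight V * \<sigma> ^ 2 / \<beta> ^ 3 + weight (V - {v, u1, u2}) + weight (V - {v, u1, u2, z1})
    + weight (V - {v, u1, u2, z2}) \<le> weight V"
proof -
  let ?W = "weight V"
  have VV: "{v, u1, u2, z1, z2} \<subseteq> V" using vV Nv Nu1 Nu2 neighbors_subset by blast
  have u1_z1: "u1 \<in> neighbors V E z1" and u2_z2: "u2 \<in> neighbors V E z2"
    using neighbors_sym[of z1 V u1] neighbors_sym[of z2 V u2] Nu1 Nu2 VV by auto
  have "v \<noteq> u1" "v \<noteq> u2" using Nv not_in_neighbors_self[of v V] by auto
  then have card3: "card {v, u1, u2} = 3" using u12 by simp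
  have "{v, u1, u2, z1} = insert z1 {v, u1, u2}" "{v, u1, u2, z2} = insert z2 {v, u1, u2}"
    by auto
  then have card4: "card {v, u1, u2, z1} = 4" "card {v, u1, u2, z2} = 4"
    using card3 z1 z2 by simp_all
  have "weight (V - {v, u1, u2}) \<le> ?W * \<sigma> ^ card {z1, z2} / \<beta> ^ (card {v, u1, u2} + card {z1, z2})"
    using VV z1 z2 u1_z1 u2_z2 by (intro weight_Diff_two_regular[OF fin deg2]) simp_all
  then have "weight (V - {v, u1, u2}) \<le> ?W * \<sigma> ^ 2 / \<beta> ^ 5"
    using card3 z12 by (simp add: power2_eq_square)
  moreover have "weight (V - {v, u1, u2, z1}) \<le> ?W * \<sigma> ^ card {z2} / \<beta> ^ (card {v, u1, u2, z1} + card {z2})"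
    using VV z2 z12 u2_z2 by (intro weight_Diff_two_regular[OF fin deg2]) simp_all
  then have "weight (V - {v, u1, u2, z1}) \<le> ?W * \<sigma> / \<beta> ^ 5"
    using card4 by simp
  moreover have "weight (V - {v, u1, u2, z2}) \<le> ?W * \<sigma> ^ card {z1} / \<beta> ^ (card {v, u1, u2, z2} + card {z1})"
    using VV z1 z12 u1_z1 by (intro weight_Diff_two_regular[OF fin deg2]) simp_all
  then have "weight (V - {v, u1, u2, z2}) \<le> ?W * \<sigma> / \<beta> ^ 5"
    using card4 by simp
  moreover have "?W * (\<sigma>^2 / \<beta>^3 + \<sigma>^2 / \<beta>^5 + 2 * \<sigma> / \<beta>^5) \<le> ?W"
    using cycle_branching_bound mult_left_mono[OF _ less_imp_le[OF weight_pos]] by fastforce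
  moreover have "?W * (\<sigma>^2 / \<beta>^3 + \<sigma>^2 / \<beta>^5 + 2 * \<sigma> / \<beta>^5)
      = ?W * \<sigma> ^ 2 / \<beta> ^ 3 + ?W * \<sigma> ^ 2 / \<beta> ^ 5 + 2 * (?W * \<sigma> / \<beta> ^ 5)"
    by (simp add: algebra_simps)
  ultimately show ?thesis by linarith
qed

lemma mds_bound_two_regular:
  assumes fin: "finite V" and tf: "triangle_free V E"
    and IH: "\<And>W. W \<subset> V \<Longrightarrow> real (card (mds W)) \<le> weight W"
    and vV: "v \<in> V" and deg2: "\<forall>w\<in>V. degree V E w = 2"
  shows "real (card (mds V)) \<le> weight V"
proof -
  obtain u1 u2 z1 z2 where Nv: "neighbors V E v = {u1, u2}" and u12: "u1 \<noteq> u2"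
    and Nu1: "neighbors V E u1 = {v, z1}" and Nu2: "neighbors V E u2 = {v, z2}"
    and z1: "z1 \<notin> {v, u1, u2}" and z2: "z2 \<notin> {v, u1, u2}"
    using two_regular_local_structure[OF fin tf deg2 vV] .
  have "weight V * \<sigma> ^ 2 / \<beta> ^ 3 + weight (V - {v, u1, u2}) + weight (V - {v, u1, u2, z1})
      + weight (V - {v, u1, u2, z2}) \<le> weight V"
  proof (cases "z1 = z2")
    case True
    then show ?thesis by (rule two_regular_four_cycle_weights[OF fin tf vV deg2 Nv u12 Nu1 Nu2 z1 z2])
  next
    case False
    then show ?thesis by (rule two_regular_long_cycle_weights[OF fin tf vV deg2 Nv u12 Nu1 Nu2 z1 z2])
  qed
  then show ?thesis
    using mds_two_regular_branch[OF fin IH vV deg2 Nv u12 Nu1 Nu2] by linarith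
qed

text \<open>Every vertex outside the closed neighbourhood of \<open>u\<close> that is deleted along with
  \<open>N[w]\<close> has degree at least 1, hence weight at least \<open>\<sigma>\<close>.\<close>
lemma weight_Diff_closed_neighborhood_edge_mult_le:
  assumes fin: "finite V" and tf: "triangle_free V E" and uV: "u \<in> V" and w: "w \<in> neighbors V E u"
  shows "weight (V - (insert w (neighbors V E w) \<union> insert u (neighbors V E u)))
    * ((\<Prod>s\<in>insert u (neighbors V E u). \<omega> (degree V E s)) * \<sigma> ^ (degree V E w - 1)) \<le> weight V"
proof -
  let ?Nu = "insert u (neighbors V E u)" and ?Z = "neighbors V E w - {u}"
  have wV: "w \<in> V" using w neighbors_subset by blast
  have u_w: "u \<in> neighbors V E w" using neighbors_sym[OF w uV] .
  have S: "insert w (neighbors V E w) \<union> ?Nu = ?Nu \<union> ?Z" using w u_w by auto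
  have disj: "?Nu \<inter> ?Z = {}"
    using triangle_free_neighbors_disjoint[OF tf uV w] u_w not_in_neighbors_self[of w V] by auto
  have finZ: "finite ?Z" and finNu: "finite ?Nu" using fin by (simp_all add: finite_neighbors)
  have "\<sigma> ^ card ?Z \<le> (\<Prod>z\<in>?Z. \<omega> (degree V E z))"
  proof -
    have "1 \<le> degree V E z" if "z \<in> ?Z" for z
      using that neighbors_sym[of z V w] wV fin
      by (auto simp: degree_def finite_neighbors card_gt_0_iff Suc_le_eq)
    then have "\<omega> 1 \<le> \<omega> (degree V E z)" if "z \<in> ?Z" for z
      using that by (intro omega_mono)
    then have "\<sigma> \<le> \<omega> (degree V E z)" if "z \<in> ?Z" for z
      using that by (simp add: \<omega>_def)
    then have "(\<Prod>z\<in>?Z. \<sigma>) \<le> (\<Prod>z\<in>?Z. \<omega> (degree V E z))"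
      using sigma_pos by (intro prod_mono) (simp add: less_imp_le)
    then show ?thesis by simp
  qed
  moreover have "card ?Z = degree V E w - 1" using u_w fin by (simp add: degree_def finite_neighbors)
  ultimately have "(\<Prod>s\<in>?Nu. \<omega> (degree V E s)) * \<sigma> ^ (degree V E w - 1)
      \<le> (\<Prod>s\<in>?Nu. \<omega> (degree V E s)) * (\<Prod>s\<in>?Z. \<omega> (degree V E s))"
    by (intro mult_left_mono) (simp_all add: prod_nonneg less_imp_le[OF omega_pos])
  also have "\<dots> = (\<Prod>s\<in>?Nu \<union> ?Z. \<omega> (degree V E s))"
    by (rule prod.union_disjoint[OF finNu finZ disj, symmetric])
  finally have "(\<Prod>s\<in>?Nu. \<omega> (degree V E s)) * \<sigma> ^ (degree V E w - 1)
      \<le> (\<Prod>s\<in>?Nu \<union> ?Z. \<omega> (degree V E s))" .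
  moreover have "?Nu \<union> ?Z \<subseteq> V" using uV neighbors_subset by blast
  ultimately show ?thesis unfolding S by (rule weight_Diff_le[OF fin, rotated])
qed

lemma leaf_degree_Diff:
  assumes fin: "finite V" and vV: "v \<in> V" and Nv: "neighbors V E v = {u}"
    and w: "w \<in> neighbors V E u - {v}"
  shows "degree (V - {u, v}) E w = degree V E w - 1"
proof -
  have wV: "w \<in> V" and "w \<noteq> u" using w neighbors_subset not_in_neighbors_self by blast+
  have "u \<in> V" using Nv neighbors_subset by blast
  have "v \<notin> neighbors V E w" using neighbors_sym[OF _ wV, of v] Nv \<open>w \<noteq> u\<close> by auto
  moreover have "u \<in> neighbors V E w" using w neighbors_sym[of w V u] \<open>u \<in> V\<close> by blast
  moreover from calculation(1) have "neighbors V E w - {u, v} = neighbors V E w - {u}" by auto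
  ultimately show ?thesis using fin by (simp add: degree_def neighbors_Diff finite_neighbors)
qed

lemma leaf_closed_neighborhood_prod:
  assumes fin: "finite V" and vV: "v \<in> V" and Nv: "neighbors V E v = {u}"
    and deg_u: "2 \<le> degree V E u"
  defines "W \<equiv> neighbors V E u - {v}"
  shows "(\<Prod>s\<in>insert u (neighbors V E u). \<omega> (degree V E s))
    = \<sigma> ^ (card {w \<in> W. degree V E w = 1} + 1) * \<beta> ^ (card {w \<in> W. 2 \<le> degree V E w} + 1)"
proof -
  have "v \<in> neighbors V E u" using neighbors_sym[of u V v] Nv vV by simp
  then have "insert u (neighbors V E u) = insert u (insert v W)" by (auto simp: W_def)
  moreover have "u \<notin> insert v W" "v \<notin> W" "finite W"
    using not_in_neighbors_self[of u V] Nv fin by (auto simp: W_def finite_neighbors)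
  moreover have "degree V E v = 1" using Nv by (simp add: degree_def)
  ultimately show ?thesis
    using deg_u prod_omega_eq[of W "degree V E"] by (simp add: \<omega>_def)
qed

lemma leaf_weight_Diff_pair:
  assumes fin: "finite V" and vV: "v \<in> V" and Nv: "neighbors V E v = {u}"
    and deg_u: "2 \<le> degree V E u"
  defines "W \<equiv> neighbors V E u - {v}"
  shows "weight (V - {u, v})
      * (\<sigma> ^ (card {w \<in> W. degree V E w = 1} + 1) * \<beta> ^ (card {w \<in> W. 2 \<le> degree V E w} + 1))
    \<le> weight V * (\<sigma> ^ card {w \<in> W. degree V E w = 2} * \<beta> ^ card {w \<in> W. 3 \<le> degree V E w})"
proof -
  have uV: "u \<in> V" using Nv neighbors_subset by blast
  have "u \<noteq> v" using Nv not_in_neighbors_self[of v V] by auto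
  have finW: "finite W" using fin by (simp add: W_def finite_neighbors)
  have WS: "W \<subseteq> V - {u, v}" using neighbors_subset not_in_neighbors_self by (auto simp: W_def)
  have "(\<Prod>w\<in>W. \<omega> (degree (V - {u, v}) E w)) = (\<Prod>w\<in>W. \<omega> (degree V E w - 1))"
    using leaf_degree_Diff[OF fin vV Nv] by (simp add: W_def)
  also have "\<dots> = \<sigma> ^ card {w \<in> W. degree V E w = 2} * \<beta> ^ card {w \<in> W. 3 \<le> degree V E w}"
  proof -
    have "{w \<in> W. degree V E w - 1 = 1} = {w \<in> W. degree V E w = 2}"
      "{w \<in> W. 2 \<le> degree V E w - 1} = {w \<in> W. 3 \<le> degree V E w}" by auto
    then show ?thesis using prod_omega_eq[OF finW, of "\<lambda>w. degree V E w - 1"] by simp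
  qed
  finally have "weight (V - {u, v}) * (\<Prod>s\<in>{u, v}. \<omega> (degree V E s)) * (\<Prod>w\<in>W. \<omega> (degree V E w))
      \<le> weight V * (\<sigma> ^ card {w \<in> W. degree V E w = 2} * \<beta> ^ card {w \<in> W. 3 \<le> degree V E w})"
    using weight_Diff_mult_le[OF fin _ WS] uV vV by simp
  moreover have "(\<Prod>s\<in>{u, v}. \<omega> (degree V E s)) = \<beta> * \<sigma>"
    using \<open>u \<noteq> v\<close> deg_u Nv by (simp add: degree_def \<omega>_def)
  ultimately show ?thesis
    using prod_omega_eq[OF finW, of "degree V E"] by (simp add: algebra_simps)
qed

lemma leaf_branch_weight_sum:
  assumes fin: "finite V" and tf: "triangle_free V E"
    and vV: "v \<in> V" and Nv: "neighbors V E v = {u}" and deg_u: "2 \<le> degree V E u"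
  shows "weight (V - insert u (neighbors V E u)) + weight (V - {u, v})
    + (\<Sum>w\<in>neighbors V E u - {v}. weight (V - (insert w (neighbors V E w) \<union> insert u (neighbors V E u))))
    \<le> weight V"
proof -
  define W where "W = neighbors V E u - {v}"
  define p q r where "p = card {w \<in> W. degree V E w = 1}" and "q = card {w \<in> W. degree V E w = 2}"
    and "r = card {w \<in> W. 3 \<le> degree V E w}"
  define P where "P = \<sigma> ^ (p + 1) * \<beta> ^ (1 + q + r)"
  let ?Nu = "insert u (neighbors V E u)"
  have uV: "u \<in> V" using Nv neighbors_subset by blast
  have finW: "finite W" using fin by (simp add: W_def finite_neighbors)
  have deg_W: "\<forall>w\<in>W. 1 \<le> degree V E w"
    using neighbors_sym[of _ V u] uV fin
    by (auto simp: W_def degree_def finite_neighbors card_gt_0_iff Suc_le_eq)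
  note card_classes = card_degree_classes[OF finW deg_W]
  have "v \<in> neighbors V E u" using neighbors_sym[of u V v] Nv vV by simp
  then have pqr: "1 \<le> p + q + r"
    using card_classes(2) deg_u fin by (simp add: p_def q_def r_def W_def degree_def finite_neighbors)
  have P: "(\<Prod>s\<in>?Nu. \<omega> (degree V E s)) = P" and "0 < P"
    using leaf_closed_neighborhood_prod[OF fin vV Nv deg_u] card_classes(1) sigma_pos beta_pos
    by (simp_all add: P_def p_def q_def r_def W_def add.commute)
  have "weight (V - ?Nu) \<le> weight V / P"
    using weight_Diff_le[OF fin, of ?Nu P] P uV neighbors_subset \<open>0 < P\<close> by (simp add: field_simps)
  moreover have "weight (V - {u, v}) \<le> weight V / P * (\<sigma> ^ q * \<beta> ^ r)"
    using leaf_weight_Diff_pair[OF fin vV Nv deg_u] card_classes(1) \<open>0 < P\<close>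
    by (simp add: P_def p_def q_def r_def W_def field_simps)
  moreover have "(\<Sum>w\<in>W. weight (V - (insert w (neighbors V E w) \<union> ?Nu)))
      \<le> (\<Sum>w\<in>W. weight V / P * (1 / \<sigma> ^ (degree V E w - 1)))"
  proof (rule sum_mono)
    fix w assume "w \<in> W"
    then show "weight (V - (insert w (neighbors V E w) \<union> ?Nu)) \<le> weight V / P * (1 / \<sigma> ^ (degree V E w - 1))"
      using weight_Diff_closed_neighborhood_edge_mult_le[OF fin tf uV, of w] P \<open>0 < P\<close> sigma_pos
      by (simp add: W_def field_simps)
  qed
  moreover have "weight V / P * (1 + \<sigma> ^ q * \<beta> ^ r + (\<Sum>w\<in>W. 1 / \<sigma> ^ (degree V E w - 1)))
      \<le> weight V / P * P"
  proof (rule mult_left_mono)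
    show "1 + \<sigma> ^ q * \<beta> ^ r + (\<Sum>w\<in>W. 1 / \<sigma> ^ (degree V E w - 1)) \<le> P"
      using sum_inverse_sigma_pow_le[OF finW deg_W] leaf_slack_nonneg[OF pqr]
      unfolding leaf_slack_def P_def p_def q_def r_def by linarith
  qed (use weight_pos \<open>0 < P\<close> in \<open>simp add: less_imp_le\<close>)
  ultimately show ?thesis
    using \<open>0 < P\<close> by (simp add: W_def algebra_simps sum_distrib_left)
qed

lemma mds_bound_leaf:
  assumes fin: "finite V" and tf: "triangle_free V E"
    and IH: "\<And>W. W \<subset> V \<Longrightarrow> real (card (mds W)) \<le> weight W"
    and vV: "v \<in> V" and Nv: "neighbors V E v = {u}" and deg_u: "2 \<le> degree V E u"
  shows "real (card (mds V)) \<le> weight V"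
proof -
  let ?Nu = "insert u (neighbors V E u)"
  have IH': "real (card (mds (V - S))) \<le> weight (V - S)" if "u \<in> S" for S
    using that Nv neighbors_subset by (intro IH) blast
  have "real (card (mds V)) \<le> real (card (mds (V - ?Nu))) + real (card (mds (V - {u, v})))
      + (\<Sum>w\<in>neighbors V E u - {v}. real (card (mds (V - (insert w (neighbors V E w) \<union> ?Nu)))))"
    using card_mds_branch_leaf[OF fin vV Nv]
    unfolding of_nat_sum[symmetric] of_nat_add[symmetric] of_nat_le_iff .
  also have "\<dots> \<le> weight (V - ?Nu) + weight (V - {u, v})
      + (\<Sum>w\<in>neighbors V E u - {v}. weight (V - (insert w (neighbors V E w) \<union> ?Nu)))"
    using IH'[of ?Nu] IH'[of "{u, v}"] IH' by (intro add_mono sum_mono) simp_all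
  also have "\<dots> \<le> weight V"
    by (rule leaf_branch_weight_sum[OF fin tf vV Nv deg_u])
  finally show ?thesis .
qed

lemma mds_bound_min_degree2:
  assumes fin: "finite V" and tf: "triangle_free V E"
    and IH: "\<And>W. W \<subset> V \<Longrightarrow> real (card (mds W)) \<le> weight W"
    and ne: "V \<noteq> {}" and deg_ge2: "\<forall>w\<in>V. 2 \<le> degree V E w"
  shows "real (card (mds V)) \<le> weight V"
proof (cases "\<exists>v\<in>V. 4 \<le> degree V E v")
  case True
  then show ?thesis using mds_bound_high_degree[OF fin tf IH _ deg_ge2] by blast
next
  case False
  then have le3: "\<forall>w\<in>V. degree V E w \<le> 3" by force
  show ?thesis
  proof (cases "\<exists>v\<in>V. degree V E v = 3 \<and> (\<exists>u\<in>neighbors V E v. degree V E u = 2)")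
    case True
    then obtain v where "v \<in> V" "degree V E v = 3" "\<exists>u\<in>neighbors V E v. degree V E u = 2" by blast
    then have "real (card (mds V)) \<le> 0.975 * weight V"
      using mds_bound_deg3_with_deg2_neighbor[OF fin tf IH _ deg_ge2] by blast
    then show ?thesis using weight_pos[of V] by simp
  next
    case False
    have deg_N: "\<forall>u\<in>neighbors V E w. degree V E u = 3" if "w \<in> V" "degree V E w = 3" for w
      using False that le3 deg_ge2 neighbors_subset[of V w] by (metis le_antisym not_less_eq_eq
        numeral_2_eq_2 numeral_3_eq_3 subsetD)
    show ?thesis
    proof (cases "\<exists>v\<in>V. degree V E v = 3")
      case True
      then show ?thesis using mds_bound_cubic_vertex[OF fin tf IH _ deg_ge2] deg_N by blast
    next
      case False
      then have "\<forall>w\<in>V. degree V E w = 2" using le3 deg_ge2 by (metis le_antisym not_less_eq_eq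
        numeral_2_eq_2 numeral_3_eq_3)
      moreover obtain v where "v \<in> V" using ne by blast
      ultimately show ?thesis using mds_bound_two_regular[OF fin tf IH] by blast
    qed
  qed
qed

lemma mds_bound_low_degree_vertex:
  assumes fin: "finite V" and tf: "triangle_free V E"
    and IH: "\<And>W. W \<subset> V \<Longrightarrow> real (card (mds W)) \<le> weight W"
    and vV: "v \<in> V" and deg_v: "degree V E v \<le> 1"
  shows "real (card (mds V)) \<le> weight V"
proof -
  have IH_Diff: "real (card (mds (V - S))) \<le> weight V" if "S \<subseteq> V" "S \<noteq> {}" for S
  proof -
    have "real (card (mds (V - S))) \<le> weight (V - S)" using that by (intro IH) auto
    then show ?thesis using weight_Diff_le_weight[OF fin that(1)] by linarith
  qed
  consider "neighbors V E v = {}" | u where "neighbors V E v = {u}"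
    using deg_v unfolding degree_def
    by (metis card_0_eq card_1_singletonE finite_neighbors fin le_eq_less_or_eq less_one)
  then show ?thesis
  proof cases
    case 1
    then show ?thesis using card_mds_isolated_vertex[OF fin vV] IH_Diff[of "{v}"] vV by fastforce
  next
    case (2 u)
    then have uV: "u \<in> V" and v_Nu: "v \<in> neighbors V E u"
      using neighbors_subset neighbors_sym[of u V v] vV by auto
    show ?thesis
    proof (cases "degree V E u = 1")
      case True
      then have "neighbors V E u = {v}" using v_Nu
        by (metis card_1_singletonE degree_def singletonD)
      then show ?thesis using card_mds_K2_component[OF fin vV uV 2] IH_Diff[of "{u, v}"] vV uV
        by fastforce
    next
      case False
      have "degree V E u \<noteq> 0" using v_Nu fin by (auto simp: degree_def finite_neighbors)
      then show ?thesis using mds_bound_leaf[OF fin tf IH vV 2] False by simp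
    qed
  qed
qed

theorem mds_le_weight:
  assumes "finite V" "triangle_free V E"
  shows "real (card (mds V)) \<le> weight V"
  using assms
proof (induction "card V" arbitrary: V rule: less_induct)
  case less
  note fin = less.prems(1) and tf = less.prems(2)
  have IH: "real (card (mds W)) \<le> weight W" if "W \<subset> V" for W
    using less.hyps[of W] that psubset_card_mono[OF fin] triangle_free_subset[OF tf]
    by (meson fin finite_subset psubset_imp_subset)
  show ?case
  proof (cases "\<exists>v\<in>V. degree V E v \<le> 1")
    case True
    then show ?thesis using mds_bound_low_degree_vertex[OF fin tf IH] by blast
  next
    case False
    then have "\<forall>w\<in>V. 2 \<le> degree V E w" by force
    then show ?thesis
      by (cases "V = {}") (simp_all add: mds_empty weight_empty mds_bound_min_degree2[OF fin tf IH])
  qed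
qed

lemma weight_le_if_leaf:
  assumes fin: "finite V" and vV: "v \<in> V" and deg_v: "degree V E v = 1"
  shows "weight V \<le> \<sigma> * \<beta> ^ (card V - 1)"
proof -
  have "(\<Prod>w\<in>V - {v}. \<omega> (degree V E w)) \<le> (\<Prod>w\<in>V - {v}. \<beta>)"
    by (rule prod_mono) (use omega_pos sigma_bounds beta_bounds in \<open>auto simp: \<omega>_def less_imp_le\<close>)
  then show ?thesis
    unfolding weight_def prod.remove[OF fin vV] using deg_v sigma_pos fin vV
    by (simp add: \<omega>_def card_Diff_singleton)
qed

end

theorem claim4p1:
  fixes V :: "'a set" and E :: "'a \<Rightarrow> 'a \<Rightarrow> bool"
  assumes "simple_graph V E"
    and "triangle_free V E"
    and "has_leaf V E"
  shows "real (phi V E) < 0.93 * 6 powr (real (card V) / 4)"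
proof -
  interpret graph_edges E
    using assms(1) by unfold_locales (auto simp: simple_graph_def)
  have fin: "finite V" using assms(1) by (simp add: simple_graph_def)
  obtain v where vV: "v \<in> V" and deg_v: "degree V E v = 1"
    using assms(3) by (auto simp: has_leaf_def)
  have "card V \<noteq> 0" using fin vV by auto
  then have n: "card V = Suc (card V - 1)" by simp
  have "real (phi V E) \<le> \<sigma> * \<beta> ^ (card V - 1)"
    using mds_le_weight[OF fin assms(2)] weight_le_if_leaf[OF fin vV deg_v]
    by (simp add: phi_eq_card_mds)
  also have "\<dots> < 0.93 * \<beta> * \<beta> ^ (card V - 1)"
    using sigma_bounds beta_bounds beta_pos by simp
  also have "\<dots> = 0.93 * \<beta> ^ card V"
    by (subst n) simp
  finally show ?thesis by (simp add: beta_powr)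
qed

end
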